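(* Let $\mathcal{I}$ be a suitable and well-separated collection of pairwise disjoint intervals in $\mathbb{R}/2\pi\mathbb{Z}$, and let $\alpha:\mathcal{I}\to\{-1,1\}$ be a symmetric colouring with $\hat\varepsilon\in[-1,1]^{S_o}$. Let $M:=16n$ and $\theta_k:=\frac{(2k-1)\pi}{4M}$ for $k=1,\dots,M$. Then there exists $\varepsilon:S_o\to\{-1,1\}$ such that \[ \big|s_o^{(\ell)}(\theta_k)-\hat s_\alpha^{(\ell)}(\theta_k)\big|\le(65+2\ell)\sqrt{n}\cdot(2n)^\ell \] for every $k\in[M]$ and every integer $\ell\ge0$, where $^{(\ell)}$ denotes the $\ell$-th derivative in $\theta$.
   Context: Standing setup: $n$ is a sufficiently large positive integer, $t$ is an odd integer such that $\gamma:=(2^{t+11}+2^t-1)/n$ satisfies $2^{-43}<\gamma\le2^{-40}$. A collection $\mathcal{I}$ of pairwise disjoint intervals in $\mathbb{R}/2\pi\mathbb{Z}$ is suitable if (a) endpoints of each interval lie in $\frac{\pi}{n}\mathbb{Z}$; (b) $\mathcal{I}$ is invariant under $\theta\mapsto\pi+\theta$ and $\theta\mapsto\pi-\theta$; (c) $|\mathcal{I}|=4N$ for some integer $N\le\gamma n$. It is well-separated if moreover (d) $|I|\le6\pi/n$ for each $I\in\mathcal{I}$; (e) $d(I,J)\ge\pi/n$ for distinct $I,J\in\mathcal{I}$ (distance mod $2\pi$, infimum over points); (f) $\bigcup_{I\in\mathcal{I}}I$ is disjoint from $(\pi/2)\mathbb{Z}+[-100\pi/n,100\pi/n]$. A colouring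 $\alpha:\mathcal{I}\to\{-1,1\}$ is symmetric if $\alpha(I')=\alpha(I)$ whenever $I'=\pi-I$ and $\alpha(I')=-\alpha(I)$ whenever $I'=\pi+I$. Let $S_o:=\{1,3,\dots,2n-1\}$, $K:=2^7$, $g_\alpha(\theta):=\sum_{I\in\mathcal{I}}\alpha(I)\mathbf{1}[\theta\in I]$, $\hat\varepsilon_j:=K\sqrt{n}\int_{-\pi}^{\pi}g_\alpha(\theta)\sin(j\theta)\,d\theta$ for $j\in S_o$, $\hat s_\alpha(\theta):=\sum_{j\in S_o}\hat\varepsilon_j\sin(j\theta)$, and for $\varepsilon:S_o\to\{-1,1\}$, $s_o(\theta):=\sum_{j\in S_o}\varepsilon_j\sin(j\theta)$. *)

theory Defs
  imports "HOL-Analysis.Analysis"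
begin

text \<open>An interval (arc) of the circle R/2piZ, represented as a 2pi-periodic subset of R:
  the image of the closed real interval [a,b] under the quotient map.\<close>
definition arc :: "real \<Rightarrow> real \<Rightarrow> real set" where
  "arc a b = {\<theta>. \<exists>k::int. a \<le> \<theta> + 2*pi*k \<and> \<theta> + 2*pi*k \<le> b}"

definition gamma :: "nat \<Rightarrow> int \<Rightarrow> real" where
  "gamma n t = (2 powr (t+11) + 2 powr t - 1) / real n"

definition So :: "nat \<Rightarrow> nat set" where
  "So n = {j. odd j \<and> j < 2*n}"

definition Kc :: real where "Kc = 2^7"

definition suitable :: "nat \<Rightarrow> int \<Rightarrow> real set set \<Rightarrow> bool" where
  "suitable n t \<I> \<longleftrightarrow>
     finite \<I> \<and>
     (\<forall>I\<in>\<I>. \<exists>p q::int. p \<le> q \<and> q - p < 2 * int n \<and> I = arc (p*pi/n) (q*pi/n)) \<and>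
     (\<forall>I\<in>\<I>. \<forall>J\<in>\<I>. I \<noteq> J \<longrightarrow> I \<inter> J = {}) \<and>
     (\<forall>I\<in>\<I>. (\<lambda>\<theta>. pi + \<theta>) ` I \<in> \<I> \<and> (\<lambda>\<theta>. pi - \<theta>) ` I \<in> \<I>) \<and>
     (\<exists>N::nat. card \<I> = 4*N \<and> real N \<le> gamma n t * real n)"

text \<open>Since the sets are 2pi-periodic,
  the distance mod 2pi is the infimum of |x-y| over x\<in>I, y\<in>J.\<close>
definition well_separated :: "nat \<Rightarrow> int \<Rightarrow> real set set \<Rightarrow> bool" where
  "well_separated n t \<I> \<longleftrightarrow>
     suitable n t \<I> \<and>
     (\<forall>I\<in>\<I>. \<exists>p q::int. p \<le> q \<and> q - p \<le> 6 \<and> I = arc (p*pi/n) (q*pi/n)) \<and>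
     (\<forall>I\<in>\<I>. \<forall>J\<in>\<I>. I \<noteq> J \<longrightarrow> (\<forall>x\<in>I. \<forall>y\<in>J. \<bar>x - y\<bar> \<ge> pi/n)) \<and>
     (\<forall>I\<in>\<I>. \<forall>\<theta>\<in>I. \<forall>m::int. \<bar>\<theta> - m*pi/2\<bar> > 100*pi/n)"

definition symmetric_colouring :: "real set set \<Rightarrow> (real set \<Rightarrow> real) \<Rightarrow> bool" where
  "symmetric_colouring \<I> \<alpha> \<longleftrightarrow>
     (\<forall>I\<in>\<I>. \<alpha> I \<in> {-1, 1}) \<and>
     (\<forall>I\<in>\<I>. \<forall>I'\<in>\<I>. I' = (\<lambda>\<theta>. pi - \<theta>) ` I \<longrightarrow> \<alpha> I' = \<alpha> I) \<and>
     (\<forall>I\<in>\<I>. \<forall>I'\<in>\<I>. I' = (\<lambda>\<theta>. pi + \<theta>) ` I \<longrightarrow> \<alpha> I' = - \<alpha> I)"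

definition g_alpha :: "real set set \<Rightarrow> (real set \<Rightarrow> real) \<Rightarrow> real \<Rightarrow> real" where
  "g_alpha \<I> \<alpha> \<theta> = (\<Sum>I\<in>\<I>. \<alpha> I * indicator I \<theta>)"

definition eps_hat :: "nat \<Rightarrow> real set set \<Rightarrow> (real set \<Rightarrow> real) \<Rightarrow> nat \<Rightarrow> real" where
  "eps_hat n \<I> \<alpha> j = Kc * sqrt n * integral {-pi..pi} (\<lambda>\<theta>. g_alpha \<I> \<alpha> \<theta> * sin (real j * \<theta>))"

definition s_hat :: "nat \<Rightarrow> real set set \<Rightarrow> (real set \<Rightarrow> real) \<Rightarrow> real \<Rightarrow> real" where
  "s_hat n \<I> \<alpha> \<theta> = (\<Sum>j\<in>So n. eps_hat n \<I> \<alpha> j * sin (real j * \<theta>))"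

definition s_o :: "nat \<Rightarrow> (nat \<Rightarrow> real) \<Rightarrow> real \<Rightarrow> real" where
  "s_o n \<epsilon> \<theta> = (\<Sum>j\<in>So n. \<epsilon> j * sin (real j * \<theta>))"

end

(*
  At the sample point theta_k the l-th derivative of
  s_o - s_hat equals (2n)^l * sum_j (eps j - eps_hat j) * a_(k,l) j with |a_(k,l) j| <= 1, so one
  sign vector eps has to be close to eps_hat against the vectors a_(k,l) for all k and l.
  For l >= sqrt n the trivial bound 2n <= 2 l sqrt n suffices. For the remaining O(n^(3/2))
  constraints, Spencer's partial colouring lemma is applied in rounds: while at most n (2/3)^r
  coordinates are uncoloured, the constraint (k,l) gets slack (1 + l/32) * 5 sqrt n * (5/6)^r.
  The pigeonhole step of the entropy method is carried out with explicit code lengths for the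
  bucket indices, and the growth of the slack in l keeps the total code length below m/80.
  This bounds the hereditary discrepancy by 30 (1 + l/32) sqrt n + 100, and rounding the binary
  expansion of eps_hat digit by digit (Lovasz, Spencer and Vesztergombi) turns it into a linear
  discrepancy bound of twice that, up to an arbitrarily small error.
*)
theory Submission
  imports Defs "HOL-Probability.Hoeffding"
begin

section \<open>Rademacher sums and Hamming balls\<close>

definition sign_vectors :: "'a set \<Rightarrow> ('a \<Rightarrow> real) set" where
  "sign_vectors U = PiE U (\<lambda>_. {-1, 1})"

lemma finite_sign_vectors: "finite U \<Longrightarrow> finite (sign_vectors U)"
  by (simp add: sign_vectors_def finite_PiE)

lemma card_sign_vectors: "finite U \<Longrightarrow> card (sign_vectors U) = 2 ^ card U"
  by (simp add: sign_vectors_def card_PiE numeral_2_eq_2)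

lemma sign_vectors_abs_eq_1: "x \<in> sign_vectors U \<Longrightarrow> j \<in> U \<Longrightarrow> \<bar>x j\<bar> = 1"
  by (auto simp: sign_vectors_def PiE_iff)

lemma abs_sum_mult_le:
  fixes u v :: "'a \<Rightarrow> real"
  assumes "\<forall>j\<in>J. \<bar>u j\<bar> \<le> B" "\<forall>j\<in>J. \<bar>v j\<bar> \<le> 1"
  shows "\<bar>\<Sum>j\<in>J. u j * v j\<bar> \<le> real (card J) * B"
proof -
  have "\<bar>\<Sum>j\<in>J. u j * v j\<bar> \<le> (\<Sum>j\<in>J. \<bar>u j\<bar> * \<bar>v j\<bar>)"
    unfolding abs_mult[symmetric] by (rule sum_abs)
  also have "\<dots> \<le> (\<Sum>j\<in>J. B * 1)"
    using assms by (intro sum_mono mult_mono) auto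
  finally show ?thesis
    by simp
qed

lemma cosh_le_exp_half_square: "cosh (u::real) \<le> exp (u\<^sup>2 / 2)"
proof -
  define h where "h = 2 * \<bar>u\<bar>"
  \<comment> \<open>Hoeffding's lemma for a fair coin\<close>
  have "ln (1 + (1/2) * (exp h - 1)) \<le> h\<^sup>2 / 8 + h / 2"
    using Hoeffdings_lemma_aux[of h "1/2"] by (simp add: h_def)
  moreover have "1 + (1/2) * (exp h - 1) = (1 + exp h) / 2" "h\<^sup>2 / 8 + h / 2 = u\<^sup>2 / 2 + \<bar>u\<bar>"
    by (simp_all add: h_def field_simps power2_eq_square)
  ultimately have "(1 + exp h) / 2 \<le> exp (u\<^sup>2 / 2 + \<bar>u\<bar>)"
    by (smt (verit) exp_gt_zero exp_le_cancel_iff exp_ln)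
  hence "(1 + exp h) / 2 * exp (- \<bar>u\<bar>) \<le> exp (u\<^sup>2 / 2 + \<bar>u\<bar>) * exp (- \<bar>u\<bar>)"
    by (intro mult_right_mono) auto
  hence "(exp (- \<bar>u\<bar>) + exp \<bar>u\<bar>) / 2 \<le> exp (u\<^sup>2 / 2)"
    by (simp add: h_def algebra_simps flip: exp_add)
  thus ?thesis
    by (cases "u \<ge> 0") (auto simp: cosh_def algebra_simps)
qed

lemma sum_sign_vectors_exp_le:
  assumes "finite U" "\<forall>j\<in>U. \<bar>a j\<bar> \<le> 1"
  shows "(\<Sum>x\<in>sign_vectors U. exp (\<mu> * (\<Sum>j\<in>U. a j * x j))) \<le> 2 ^ card U * exp (\<mu>\<^sup>2 * card U / 2)"
proof -
  have "(\<Sum>x\<in>sign_vectors U. exp (\<mu> * (\<Sum>j\<in>U. a j * x j)))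
      = (\<Sum>x\<in>sign_vectors U. \<Prod>j\<in>U. exp (\<mu> * a j * x j))"
    using assms(1) by (simp add: sum_distrib_left exp_sum mult.assoc)
  also have "\<dots> = (\<Prod>j\<in>U. \<Sum>s\<in>{-1, 1}. exp (\<mu> * a j * s))"
    unfolding sign_vectors_def by (rule prod_sum_PiE[symmetric]) (use assms in auto)
  also have "\<dots> \<le> (\<Prod>j\<in>U. 2 * exp (\<mu>\<^sup>2 / 2))"
  proof (intro prod_mono conjI)
    fix j assume j: "j \<in> U"
    have "(\<Sum>s\<in>{-1, 1::real}. exp (\<mu> * a j * s)) = 2 * cosh (\<mu> * a j)"
      by (simp add: cosh_def)
    also have "\<dots> \<le> 2 * exp ((\<mu> * a j)\<^sup>2 / 2)"
      using cosh_le_exp_half_square by simp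
    also have "(\<mu> * a j)\<^sup>2 \<le> \<mu>\<^sup>2"
      using assms(2) j abs_square_le_1[of "a j"] by (simp add: power_mult_distrib mult_left_le)
    finally show "(\<Sum>s\<in>{-1, 1::real}. exp (\<mu> * a j * s)) \<le> 2 * exp (\<mu>\<^sup>2 / 2)"
      by simp
  qed (auto intro: sum_nonneg)
  also have "\<dots> = 2 ^ card U * exp (\<mu>\<^sup>2 * card U / 2)"
    by (simp add: power_mult_distrib flip: exp_of_nat_mult)
  finally show ?thesis .
qed

lemma card_signed_sum_ge_le:
  assumes "finite U" "\<forall>j\<in>U. \<bar>a j\<bar> \<le> 1" "card U > 0" "t \<ge> 0"
  shows "card {x\<in>sign_vectors U. t \<le> (\<Sum>j\<in>U. a j * x j)}
           \<le> 2 ^ card U * exp (- t\<^sup>2 / (2 * real (card U)))"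
proof -
  define m where "m = real (card U)"
  define \<mu> where "\<mu> = t / m"
  have m: "m > 0" and \<mu>: "\<mu> \<ge> 0"
    using assms by (simp_all add: m_def \<mu>_def)
  let ?S = "{x\<in>sign_vectors U. t \<le> (\<Sum>j\<in>U. a j * x j)}"
  have "card ?S * exp (\<mu> * t) = (\<Sum>x\<in>?S. exp (\<mu> * t))"
    by simp
  also have "\<dots> \<le> (\<Sum>x\<in>?S. exp (\<mu> * (\<Sum>j\<in>U. a j * x j)))"
    using \<mu> by (intro sum_mono) (auto intro: mult_left_mono)
  also have "\<dots> \<le> (\<Sum>x\<in>sign_vectors U. exp (\<mu> * (\<Sum>j\<in>U. a j * x j)))"
    using assms(1) by (intro sum_mono2 finite_sign_vectors) auto
  also have "\<dots> \<le> 2 ^ card U * exp (\<mu>\<^sup>2 * m / 2)"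
    using sum_sign_vectors_exp_le[OF assms(1,2)] by (simp add: m_def)
  finally have "card ?S \<le> 2 ^ card U * exp (\<mu>\<^sup>2 * m / 2 - \<mu> * t)"
    by (simp add: exp_diff pos_le_divide_eq)
  also have "\<mu>\<^sup>2 * m / 2 - \<mu> * t = - t\<^sup>2 / (2 * m)"
    using m by (simp add: \<mu>_def field_simps power2_eq_square)
  finally show ?thesis by (simp add: m_def)
qed

lemma card_abs_signed_sum_ge_le:
  assumes "finite U" "\<forall>j\<in>U. \<bar>a j\<bar> \<le> 1" "card U > 0" "t \<ge> 0"
  shows "card {x\<in>sign_vectors U. t \<le> \<bar>\<Sum>j\<in>U. a j * x j\<bar>}
           \<le> 2 * 2 ^ card U * exp (- t\<^sup>2 / (2 * real (card U)))"
proof -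
  let ?S = "\<lambda>a. {x\<in>sign_vectors U. t \<le> (\<Sum>j\<in>U. a j * x j)}"
  have fin: "finite (?S a)" "finite (?S (\<lambda>j. - a j))"
    using assms(1) by (simp_all add: finite_sign_vectors)
  have "{x\<in>sign_vectors U. t \<le> \<bar>\<Sum>j\<in>U. a j * x j\<bar>} \<subseteq> ?S a \<union> ?S (\<lambda>j. - a j)"
    by (auto simp: sum_negf abs_if)
  hence "card {x\<in>sign_vectors U. t \<le> \<bar>\<Sum>j\<in>U. a j * x j\<bar>} \<le> card (?S a \<union> ?S (\<lambda>j. - a j))"
    using fin by (intro card_mono) auto
  also have "\<dots> \<le> card (?S a) + card (?S (\<lambda>j. - a j))"
    by (rule card_Un_le)
  finally have "real (card {x\<in>sign_vectors U. t \<le> \<bar>\<Sum>j\<in>U. a j * x j\<bar>})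
      \<le> real (card (?S a)) + real (card (?S (\<lambda>j. - a j)))"
    by linarith
  also have "\<dots> \<le> 2 ^ card U * exp (- t\<^sup>2 / (2 * real (card U))) + 2 ^ card U * exp (- t\<^sup>2 / (2 * real (card U)))"
    using assms by (intro add_mono card_signed_sum_ge_le) auto
  finally show ?thesis by simp
qed

lemma sum_binomial_below_third_le:
  "(\<Sum>i | 3 * i < m. real (m choose i)) \<le> (3/2) ^ m * 2 powr (real m / 3)"
proof -
  define f where "f i = real (m choose i) * (1/3) ^ i * (2/3) ^ (m - i)" for i
  define c :: real where "c = (2/3) ^ m / 2 powr (real m / 3)"
  have le: "real (m choose i) * c \<le> f i" if "3 * i < m" for i
  proof -
    have "(2/3::real) ^ m = (2/3) ^ i * (2/3) ^ (m - i)"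
      using that by (simp flip: power_add)
    hence eq: "(1/3::real) ^ i * (2/3) ^ (m - i) = (2/3) ^ m / 2 ^ i"
      by (simp add: field_simps flip: power_mult_distrib)
    have "(2::real) ^ i = 2 powr real i"
      by (simp add: powr_realpow)
    also have "\<dots> \<le> 2 powr (real m / 3)"
      using that by (intro powr_mono) auto
    finally have "c \<le> (2/3) ^ m / 2 ^ i"
      unfolding c_def by (intro divide_left_mono) auto
    thus ?thesis
      unfolding f_def mult.assoc eq by (intro mult_left_mono) auto
  qed
  have "(\<Sum>i | 3 * i < m. real (m choose i)) * c \<le> (\<Sum>i | 3 * i < m. f i)"
    unfolding sum_distrib_right using le by (intro sum_mono) auto
  also have "\<dots> \<le> (\<Sum>i\<le>m. f i)"
    by (intro sum_mono2) (auto simp: f_def)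
  also have "\<dots> = (1/3 + 2/3) ^ m"
    unfolding f_def by (subst binomial_ring) simp
  finally have "(\<Sum>i | 3 * i < m. real (m choose i)) * c \<le> 1"
    by simp
  thus ?thesis
    by (simp add: c_def field_simps power_divide)
qed

lemma card_hamming_ball_third_le:
  assumes "finite U" "x0 \<in> sign_vectors U"
  shows "card {y\<in>sign_vectors U. 3 * card {j\<in>U. y j \<noteq> x0 j} < card U}
           \<le> (3/2) ^ card U * 2 powr (real (card U) / 3)"
proof -
  define D where "D y = {j\<in>U. y j \<noteq> x0 j}" for y :: "'a \<Rightarrow> real"
  let ?N = "{y\<in>sign_vectors U. 3 * card (D y) < card U}"
  have fin: "finite {i. 3 * i < card U}"
    by (rule finite_subset[of _ "{..<card U}"]) auto
  have "inj_on D ?N"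
  proof
    fix y1 y2 assume y: "y1 \<in> ?N" "y2 \<in> ?N" and "D y1 = D y2"
    have "y1 j = y2 j" if "j \<in> U" for j
    proof -
      have "(y1 j \<noteq> x0 j) = (y2 j \<noteq> x0 j)"
        using \<open>D y1 = D y2\<close> that unfolding D_def by blast
      moreover have "y1 j \<in> {-1, 1}" "y2 j \<in> {-1, 1}" "x0 j \<in> {-1, 1}"
        using y assms(2) that by (auto simp: sign_vectors_def PiE_iff)
      ultimately show ?thesis
        by auto
    qed
    thus "y1 = y2"
      using y by (intro ext) (metis (mono_tags, lifting) PiE_arb mem_Collect_eq sign_vectors_def)
  qed
  hence "card ?N = card (D ` ?N)"
    by (simp add: card_image)
  also have "\<dots> \<le> card (\<Union>i\<in>{i. 3 * i < card U}. {A. A \<subseteq> U \<and> card A = i})"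
    using assms(1) fin by (intro card_mono finite_UN_I) (auto simp: D_def)
  also have "\<dots> \<le> (\<Sum>i | 3 * i < card U. card {A. A \<subseteq> U \<and> card A = i})"
    using fin by (rule card_UN_le)
  also have "\<dots> = (\<Sum>i | 3 * i < card U. card U choose i)"
    using assms(1) by (simp add: n_subsets)
  finally have "real (card ?N) \<le> (\<Sum>i | 3 * i < card U. real (card U choose i))"
    by (simp flip: of_nat_sum)
  also have "\<dots> \<le> (3/2) ^ card U * 2 powr (real (card U) / 3)"
    by (rule sum_binomial_below_third_le)
  finally show ?thesis
    by (simp add: D_def)
qed

section \<open>Partial colourings by the entropy method\<close>

definition bucket :: "'a set \<Rightarrow> ('a \<Rightarrow> real) \<Rightarrow> real \<Rightarrow> ('a \<Rightarrow> real) \<Rightarrow> int" where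
  "bucket U a \<Delta> x = \<lfloor>(\<Sum>j\<in>U. a j * x j) / (2 * \<Delta>) + 1/2\<rfloor>"

(* Code lengths of bucket indices: they satisfy Kraft's inequality (sum_exp_neg_bucket_weight_le_1),
   and for y = Delta^2 / (2 |U|) the bucket of a uniformly random sign vector has average code
   length at most bucket_weight_bound y. Counting bucket vectors by code length replaces the
   entropy bound of the entropy method. *)
definition bucket_weight :: "real \<Rightarrow> int \<Rightarrow> real" where
  "bucket_weight y v = (if v = 0 then - ln (1 - 2 * exp (- y)) else y + real (nat \<bar>v\<bar>) * ln 2)"

definition bucket_weight_bound :: "real \<Rightarrow> real" where
  "bucket_weight_bound y = exp (- y) * (2 * y + 8)"

lemma exp_neg_le_quarter: "(y::real) \<ge> 2 \<Longrightarrow> exp (- y) \<le> 1/4"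
proof -
  assume "y \<ge> 2"
  have "(1 + 2 / real 2) ^ 2 \<le> exp (2::real)"
    by (rule exp_ge_one_plus_x_over_n_power_n) auto
  also have "\<dots> \<le> exp y"
    using \<open>y \<ge> 2\<close> by simp
  finally show ?thesis
    by (simp add: exp_minus field_simps)
qed

lemma bucket_weight_nonneg: "y \<ge> 2 \<Longrightarrow> bucket_weight y v \<ge> 0"
  using exp_neg_le_quarter[of y] by (simp add: bucket_weight_def)

lemma sum_exp_neg_bucket_weight_le_1:
  assumes "y \<ge> 2"
  shows "(\<Sum>v\<in>{-int R..int R}. exp (- bucket_weight y v)) \<le> 1"
proof -
  have exp_weight: "exp (- bucket_weight y v) = exp (- y) / 2 ^ nat \<bar>v\<bar>" if "v \<noteq> 0" for v
  proof -
    have "- bucket_weight y v = - y - real (nat \<bar>v\<bar>) * ln 2"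
      using that by (simp add: bucket_weight_def)
    hence "exp (- bucket_weight y v) = exp (- y) / exp (real (nat \<bar>v\<bar>) * ln 2)"
      by (simp only: exp_diff)
    also have "exp (real (nat \<bar>v\<bar>) * ln 2) = 2 ^ nat \<bar>v\<bar>"
      by (simp only: exp_of_nat_mult) simp
    finally show ?thesis .
  qed
  have "(\<Sum>v\<in>{-int R..int R}. exp (- bucket_weight y v)) = 1 - 2 * exp (- y) * (1/2) ^ R"
  proof (induction R)
    case 0
    have "2 * exp (- y) < 1"
      using exp_neg_le_quarter[OF assms] by simp
    thus ?case
      by (simp add: bucket_weight_def)
  next
    case (Suc R)
    have "{-int (Suc R)..int (Suc R)} = insert (int R + 1) (insert (- (int R + 1)) {-int R..int R})"
      by auto
    hence "(\<Sum>v\<in>{-int (Suc R)..int (Suc R)}. exp (- bucket_weight y v))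
        = exp (- bucket_weight y (int R + 1)) + exp (- bucket_weight y (- (int R + 1)))
          + (\<Sum>v\<in>{-int R..int R}. exp (- bucket_weight y v))"
      by simp
    also have "\<dots> = 2 * (exp (- y) / 2 ^ Suc R) + (1 - 2 * exp (- y) * (1/2) ^ R)"
      using Suc.IH by (simp add: exp_weight nat_add_distrib)
    finally show ?case
      by (simp add: field_simps power_divide)
  qed
  thus ?thesis
    by simp
qed

lemma abs_signed_sum_ge_of_abs_bucket_ge:
  assumes "\<Delta> > 0" "v \<ge> 1" "v \<le> \<bar>bucket U a \<Delta> x\<bar>"
  shows "(2 * real_of_int v - 1) * \<Delta> \<le> \<bar>\<Sum>j\<in>U. a j * x j\<bar>"
proof -
  define d where "d = (\<Sum>j\<in>U. a j * x j)"
  have "v \<le> \<bar>\<lfloor>d / (2 * \<Delta>) + 1/2\<rfloor>\<bar>"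
    using assms(3) by (simp add: bucket_def d_def)
  hence "real_of_int v \<le> d / (2 * \<Delta>) + 1/2 \<or> d / (2 * \<Delta>) + 1/2 < 1 - real_of_int v"
    by linarith
  hence "(2 * real_of_int v - 1) * \<Delta> \<le> d \<or> d < - ((2 * real_of_int v - 1) * \<Delta>)"
    using assms(1) by (auto simp: field_simps)
  thus ?thesis
    unfolding d_def by linarith
qed

lemma abs_bucket_le:
  assumes "\<forall>j\<in>U. \<bar>a j\<bar> \<le> 1" "x \<in> sign_vectors U" "\<Delta> > 0"
  shows "\<bar>bucket U a \<Delta> x\<bar> \<le> int (nat \<lceil>real (card U) / (2 * \<Delta>)\<rceil> + 1)"
proof -
  have "\<bar>(\<Sum>j\<in>U. a j * x j) / (2 * \<Delta>)\<bar> \<le> real (card U) / (2 * \<Delta>)"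
  proof -
    have "\<bar>\<Sum>j\<in>U. a j * x j\<bar> \<le> real (card U) * 1"
      using assms(1) sign_vectors_abs_eq_1[OF assms(2)] by (intro abs_sum_mult_le) auto
    thus ?thesis
      using assms(3) by (simp add: abs_divide divide_right_mono)
  qed
  moreover have "real (card U) / (2 * \<Delta>) \<le> of_int \<lceil>real (card U) / (2 * \<Delta>)\<rceil>"
    by (rule le_of_int_ceiling)
  ultimately show ?thesis
    unfolding bucket_def by linarith
qed

lemma card_abs_bucket_ge_le:
  assumes U: "finite U" "card U > 0" and a: "\<forall>j\<in>U. \<bar>a j\<bar> \<le> 1" and "\<Delta> > 0"
    and y: "y = \<Delta>\<^sup>2 / (2 * real (card U))" "y \<ge> 2"
  shows "card {x\<in>sign_vectors U. int i + 1 \<le> \<bar>bucket U a \<Delta> x\<bar>}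
           \<le> 2 * 2 ^ card U * exp (- y) * (1/2) ^ i"
proof -
  let ?t = "(2 * real i + 1) * \<Delta>"
  have "{x\<in>sign_vectors U. int i + 1 \<le> \<bar>bucket U a \<Delta> x\<bar>}
          \<subseteq> {x\<in>sign_vectors U. ?t \<le> \<bar>\<Sum>j\<in>U. a j * x j\<bar>}"
  proof (intro subsetI CollectI conjI; elim CollectE conjE)
    fix x assume "x \<in> sign_vectors U" "int i + 1 \<le> \<bar>bucket U a \<Delta> x\<bar>"
    thus "x \<in> sign_vectors U" "?t \<le> \<bar>\<Sum>j\<in>U. a j * x j\<bar>"
      using abs_signed_sum_ge_of_abs_bucket_ge[OF \<open>\<Delta> > 0\<close>, of "int i + 1"] by (simp_all add: ac_simps)
  qed
  hence "card {x\<in>sign_vectors U. int i + 1 \<le> \<bar>bucket U a \<Delta> x\<bar>}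
          \<le> card {x\<in>sign_vectors U. ?t \<le> \<bar>\<Sum>j\<in>U. a j * x j\<bar>}"
    using U by (intro card_mono) (auto simp: finite_sign_vectors)
  also have "real \<dots> \<le> 2 * 2 ^ card U * exp (- ?t\<^sup>2 / (2 * real (card U)))"
    using \<open>\<Delta> > 0\<close> by (intro card_abs_signed_sum_ge_le U a) simp
  also have "- ?t\<^sup>2 / (2 * real (card U)) = - y - (4 * real i + 4 * real i ^ 2) * y"
    unfolding y(1) using U(2) by (simp add: power2_eq_square field_simps)
  also have "\<dots> \<le> - y - real i * ln 2"
  proof -
    have "real i * ln 2 \<le> 4 * real i * y"
      using y(2) ln_2_less_1 by (intro mult_mono) auto
    moreover have "0 \<le> 4 * real i ^ 2 * y"
      using y(2) by simp
    ultimately show ?thesis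
      by (simp add: algebra_simps)
  qed
  also have "exp (- y - real i * ln 2) = exp (- y) * (1/2) ^ i"
    by (simp add: exp_diff exp_of_nat_mult power_divide)
  finally show ?thesis
    by (simp add: mult.assoc)
qed

lemma abs_int_eq_sum_indicator:
  fixes b :: int
  assumes "\<bar>b\<bar> \<le> int R"
  shows "real_of_int \<bar>b\<bar> = (\<Sum>i<R. if int i + 1 \<le> \<bar>b\<bar> then 1 else 0)"
proof -
  have "{..<R} \<inter> {i. int i + 1 \<le> \<bar>b\<bar>} = {..<nat \<bar>b\<bar>}"
    using assms by auto
  thus ?thesis
    by (simp add: sum.If_cases)
qed

lemma bucket_weight_le:
  assumes "y \<ge> 2"
  shows "bucket_weight y v \<le> 4 * exp (- y) + (if 1 \<le> \<bar>v\<bar> then y else 0) + ln 2 * \<bar>v\<bar>"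
proof (cases "v = 0")
  case True
  define e where "e = exp (- y)"
  have e: "0 < e" "e \<le> 1/4"
    using exp_neg_le_quarter[OF assms] by (simp_all add: e_def)
  have "- (2 * e) - 2 * (2 * e)\<^sup>2 \<le> ln (1 - 2 * e)"
    using e by (intro ln_one_minus_pos_lower_bound) auto
  moreover have "2 * (2 * e)\<^sup>2 \<le> 2 * e"
    using e by (simp add: power2_eq_square)
  ultimately show ?thesis
    using True by (simp add: bucket_weight_def e_def)
next
  case False
  hence "1 \<le> \<bar>v\<bar>"
    by linarith
  thus ?thesis
    using False by (simp add: bucket_weight_def mult.commute)
qed

lemma sum_abs_bucket_le:
  assumes U: "finite U" "card U > 0" and a: "\<forall>j\<in>U. \<bar>a j\<bar> \<le> 1" and "\<Delta> > 0"
    and y: "y = \<Delta>\<^sup>2 / (2 * real (card U))" "y \<ge> 2"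
  shows "(\<Sum>x\<in>sign_vectors U. real_of_int \<bar>bucket U a \<Delta> x\<bar>) \<le> 4 * 2 ^ card U * exp (- y)"
proof -
  define X where "X = sign_vectors U"
  define b where "b x = bucket U a \<Delta> x" for x
  define R where "R = nat \<lceil>real (card U) / (2 * \<Delta>)\<rceil> + 1"
  have "(\<Sum>x\<in>X. real_of_int \<bar>b x\<bar>) = (\<Sum>x\<in>X. \<Sum>i<R. if int i + 1 \<le> \<bar>b x\<bar> then 1 else 0)"
    using abs_bucket_le[OF a _ \<open>\<Delta> > 0\<close>]
    by (intro sum.cong refl abs_int_eq_sum_indicator) (simp add: X_def b_def R_def)
  also have "\<dots> = (\<Sum>i<R. \<Sum>x\<in>X. if int i + 1 \<le> \<bar>b x\<bar> then 1 else 0)"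
    by (rule sum.swap)
  also have "\<dots> = (\<Sum>i<R. real (card {x\<in>X. int i + 1 \<le> \<bar>b x\<bar>}))"
    using U(1) by (simp add: X_def finite_sign_vectors sum.If_cases Collect_conj_eq Int_commute)
  also have "\<dots> \<le> (\<Sum>i<R. 2 * 2 ^ card U * exp (- y) * (1/2) ^ i)"
    unfolding X_def b_def by (intro sum_mono card_abs_bucket_ge_le[OF U a \<open>\<Delta> > 0\<close> y])
  also have "\<dots> \<le> 4 * 2 ^ card U * exp (- y)"
    using sum_gp_strict[of "1/2::real" R] by (simp add: sum_distrib_left[symmetric])
  finally show ?thesis
    by (simp add: X_def b_def)
qed

lemma sum_bucket_weight_le:
  assumes U: "finite U" "card U > 0" and a: "\<forall>j\<in>U. \<bar>a j\<bar> \<le> 1" and "\<Delta> > 0"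
    and y: "y = \<Delta>\<^sup>2 / (2 * real (card U))" "y \<ge> 2"
  shows "(\<Sum>x\<in>sign_vectors U. bucket_weight y (bucket U a \<Delta> x)) \<le> 2 ^ card U * bucket_weight_bound y"
proof -
  define X where "X = sign_vectors U"
  define b where "b x = bucket U a \<Delta> x" for x
  define e where "e = exp (- y)"
  have finX: "finite X" and cardX: "card X = 2 ^ card U"
    using U by (simp_all add: X_def finite_sign_vectors card_sign_vectors)
  have "(\<Sum>x\<in>X. bucket_weight y (b x))
      \<le> (\<Sum>x\<in>X. 4 * e + (if 1 \<le> \<bar>b x\<bar> then y else 0) + ln 2 * \<bar>b x\<bar>)"
    using bucket_weight_le[OF y(2)] by (intro sum_mono) (simp add: e_def)
  also have "\<dots> = 2 ^ card U * (4 * e) + y * card {x\<in>X. 1 \<le> \<bar>b x\<bar>} + ln 2 * (\<Sum>x\<in>X. real_of_int \<bar>b x\<bar>)"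
    using finX by (simp add: sum.distrib sum_distrib_left cardX sum.If_cases Collect_conj_eq Int_commute)
  also have "\<dots> \<le> 2 ^ card U * (4 * e) + y * (2 * 2 ^ card U * e) + ln 2 * (4 * 2 ^ card U * e)"
  proof -
    have "y * card {x\<in>X. 1 \<le> \<bar>b x\<bar>} \<le> y * (2 * 2 ^ card U * e)"
      using card_abs_bucket_ge_le[OF U a \<open>\<Delta> > 0\<close> y, of 0] y(2)
      by (intro mult_left_mono) (auto simp: X_def b_def e_def)
    moreover have "ln 2 * (\<Sum>x\<in>X. real_of_int \<bar>b x\<bar>) \<le> ln 2 * (4 * 2 ^ card U * e)"
      using sum_abs_bucket_le[OF U a \<open>\<Delta> > 0\<close> y] by (intro mult_left_mono) (auto simp: X_def b_def e_def)
    ultimately show ?thesis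
      by linarith
  qed
  also have "\<dots> = 2 ^ card U * e * (4 + 2 * y + 4 * ln 2)"
    by (simp add: algebra_simps)
  also have "\<dots> \<le> 2 ^ card U * e * (2 * y + 8)"
    using ln_2_less_1 by (intro mult_left_mono) (auto simp: e_def)
  finally show ?thesis
    by (simp add: X_def b_def e_def bucket_weight_bound_def)
qed

lemma card_gt_twice_average_le:
  fixes f :: "'a \<Rightarrow> real"
  assumes "finite X" "\<forall>x\<in>X. 0 \<le> f x" "(\<Sum>x\<in>X. f x) \<le> real (card X) * E"
  shows "2 * card {x\<in>X. 2 * E < f x} \<le> card X"
proof (cases "E > 0")
  case True
  let ?S = "{x\<in>X. 2 * E < f x}"
  have "card ?S * (2 * E) = (\<Sum>x\<in>?S. 2 * E)"
    by simp
  also have "\<dots> \<le> (\<Sum>x\<in>?S. f x)"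
    by (intro sum_mono) simp
  also have "\<dots> \<le> (\<Sum>x\<in>X. f x)"
    using assms(1,2) by (intro sum_mono2) auto
  finally have "card ?S * (2 * E) \<le> card X * E"
    using assms(3) by linarith
  thus ?thesis
    using True by (simp flip: of_nat_le_iff)
next
  case False
  have empty: "{x\<in>X. 2 * E < f x} = {}"
  proof (rule ccontr)
    assume "{x\<in>X. 2 * E < f x} \<noteq> {}"
    then obtain x where "x \<in> X" "2 * E < f x"
      by blast
    moreover have "f x \<le> (\<Sum>x\<in>X. f x)"
      using assms(1,2) \<open>x \<in> X\<close> by (intro member_le_sum) auto
    moreover have "0 \<le> f x"
      using assms(2) \<open>x \<in> X\<close> by simp
    moreover have "card X > 0"
      using assms(1) \<open>x \<in> X\<close> card_gt_0_iff by blast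
    hence "real (card X) * E \<le> 1 * E"
      using False by (intro mult_right_mono_neg) auto
    ultimately show False
      using assms(3) False by linarith
  qed
  show ?thesis
    unfolding empty by simp
qed

lemma card_le_exp_of_bucket_weight_le:
  assumes "finite C" "\<forall>c\<in>C. y c \<ge> 2" "B \<subseteq> PiE C (\<lambda>c. {-int (R c)..int (R c)})"
    and "\<forall>\<beta>\<in>B. (\<Sum>c\<in>C. bucket_weight (y c) (\<beta> c)) \<le> T"
  shows "card B \<le> exp T"
proof -
  have finB: "finite B"
    by (rule finite_subset[OF assms(3) finite_PiE[OF assms(1)]]) simp
  have "card B * exp (- T) = (\<Sum>\<beta>\<in>B. exp (- T))"
    by simp
  also have "\<dots> \<le> (\<Sum>\<beta>\<in>B. \<Prod>c\<in>C. exp (- bucket_weight (y c) (\<beta> c)))"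
    using assms(1,4) by (intro sum_mono) (simp add: exp_sum[symmetric] sum_negf)
  also have "\<dots> \<le> (\<Sum>\<beta>\<in>PiE C (\<lambda>c. {-int (R c)..int (R c)}). \<Prod>c\<in>C. exp (- bucket_weight (y c) (\<beta> c)))"
    using assms(1,3) by (intro sum_mono2 finite_PiE) (auto intro: prod_nonneg)
  also have "\<dots> = (\<Prod>c\<in>C. \<Sum>v\<in>{-int (R c)..int (R c)}. exp (- bucket_weight (y c) v))"
    by (rule prod_sum_PiE[symmetric]) (use assms(1) in auto)
  also have "\<dots> \<le> 1"
    using assms(2) sum_exp_neg_bucket_weight_le_1 by (intro prod_le_1) (auto intro: sum_nonneg)
  finally show ?thesis
    by (simp add: exp_minus field_simps)
qed

lemma exists_far_pair:
  assumes "finite U" "F \<subseteq> sign_vectors U" "(3/2) ^ card U * 2 powr (real (card U) / 3) < card F"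
  shows "\<exists>x\<in>F. \<exists>y\<in>F. card U \<le> 3 * card {j\<in>U. y j \<noteq> x j}"
proof -
  have "F \<noteq> {}"
    using assms(3) by (metis card.empty of_nat_0 powr_ge_zero zero_le_power divide_nonneg_nonneg
        mult_nonneg_nonneg not_less zero_le_numeral)
  then obtain x where x: "x \<in> F"
    by blast
  let ?ball = "{y\<in>sign_vectors U. 3 * card {j\<in>U. y j \<noteq> x j} < card U}"
  have "\<not> F \<subseteq> ?ball"
  proof
    assume "F \<subseteq> ?ball"
    hence "card F \<le> card ?ball"
      using assms(1) by (intro card_mono) (auto simp: finite_sign_vectors)
    also have "real \<dots> \<le> (3/2) ^ card U * 2 powr (real (card U) / 3)"
      using x assms(2) by (intro card_hamming_ball_third_le assms(1)) auto
    finally show False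
      using assms(3) by simp
  qed
  then obtain y where "y \<in> F" "\<not> 3 * card {j\<in>U. y j \<noteq> x j} < card U"
    using assms(2) by blast
  thus ?thesis
    using x by (auto simp: not_less)
qed

definition bucket_cost :: "'a set \<Rightarrow> ('c \<Rightarrow> 'a \<Rightarrow> real) \<Rightarrow> ('c \<Rightarrow> real) \<Rightarrow> 'c set \<Rightarrow> ('a \<Rightarrow> real) \<Rightarrow> real" where
  "bucket_cost U a \<Delta> C x = (\<Sum>c\<in>C. bucket_weight (\<Delta> c ^ 2 / (2 * real (card U))) (bucket U (a c) (\<Delta> c) x))"

definition entropy_budget :: "'a set \<Rightarrow> ('c \<Rightarrow> real) \<Rightarrow> 'c set \<Rightarrow> real" where
  "entropy_budget U \<Delta> C = (\<Sum>c\<in>C. bucket_weight_bound (\<Delta> c ^ 2 / (2 * real (card U))))"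

definition bucket_vector :: "'a set \<Rightarrow> ('c \<Rightarrow> 'a \<Rightarrow> real) \<Rightarrow> ('c \<Rightarrow> real) \<Rightarrow> 'c set \<Rightarrow> ('a \<Rightarrow> real) \<Rightarrow> 'c \<Rightarrow> int" where
  "bucket_vector U a \<Delta> C x = restrict (\<lambda>c. bucket U (a c) (\<Delta> c) x) C"

lemma card_low_bucket_cost_ge:
  fixes a :: "'c \<Rightarrow> 'a \<Rightarrow> real" and \<Delta> :: "'c \<Rightarrow> real"
  assumes U: "finite U" "card U > 0"
    and a: "\<forall>c\<in>C. \<forall>j\<in>U. \<bar>a c j\<bar> \<le> 1" and \<Delta>: "\<forall>c\<in>C. \<Delta> c > 0"
    and y: "\<forall>c\<in>C. \<Delta> c ^ 2 / (2 * real (card U)) \<ge> 2"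
  shows "2 ^ (card U - 1)
           \<le> real (card {x\<in>sign_vectors U. bucket_cost U a \<Delta> C x \<le> 2 * entropy_budget U \<Delta> C})"
proof -
  define X where "X = sign_vectors U"
  define E where "E = entropy_budget U \<Delta> C"
  define G where "G = {x\<in>X. bucket_cost U a \<Delta> C x \<le> 2 * E}"
  have finX: "finite X" and cardX: "card X = 2 ^ card U"
    using U by (simp_all add: X_def finite_sign_vectors card_sign_vectors)
  have "(\<Sum>x\<in>X. bucket_cost U a \<Delta> C x)
      = (\<Sum>c\<in>C. \<Sum>x\<in>X. bucket_weight (\<Delta> c ^ 2 / (2 * real (card U))) (bucket U (a c) (\<Delta> c) x))"
    unfolding bucket_cost_def by (rule sum.swap)
  also have "\<dots> \<le> (\<Sum>c\<in>C. 2 ^ card U * bucket_weight_bound (\<Delta> c ^ 2 / (2 * real (card U))))"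
  proof (rule sum_mono)
    fix c assume "c \<in> C"
    thus "(\<Sum>x\<in>X. bucket_weight (\<Delta> c ^ 2 / (2 * real (card U))) (bucket U (a c) (\<Delta> c) x))
        \<le> 2 ^ card U * bucket_weight_bound (\<Delta> c ^ 2 / (2 * real (card U)))"
      unfolding X_def using a \<Delta> y by (intro sum_bucket_weight_le[OF U]) auto
  qed
  finally have "(\<Sum>x\<in>X. bucket_cost U a \<Delta> C x) \<le> card X * E"
    by (simp add: E_def entropy_budget_def cardX sum_distrib_left)
  moreover have "\<forall>x\<in>X. 0 \<le> bucket_cost U a \<Delta> C x"
    using y unfolding bucket_cost_def by (auto intro!: sum_nonneg bucket_weight_nonneg)
  ultimately have "2 * card {x\<in>X. 2 * E < bucket_cost U a \<Delta> C x} \<le> card X"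
    by (intro card_gt_twice_average_le finX)
  moreover have "X - G = {x\<in>X. 2 * E < bucket_cost U a \<Delta> C x}"
    by (auto simp: G_def)
  ultimately have "2 * card (X - G) \<le> card X"
    by simp
  moreover have "card X = card G + card (X - G)"
    using finX card_Diff_subset[of G X] card_mono[of X G] by (auto simp: G_def)
  ultimately have "2 ^ (card U - 1) \<le> card G"
    using U(2) cardX by (cases "card U") auto
  thus ?thesis
    by (simp add: G_def X_def E_def)
qed

lemma card_bucket_vectors_le:
  fixes a :: "'c \<Rightarrow> 'a \<Rightarrow> real" and \<Delta> :: "'c \<Rightarrow> real"
  assumes C: "finite C" and a: "\<forall>c\<in>C. \<forall>j\<in>U. \<bar>a c j\<bar> \<le> 1" and \<Delta>: "\<forall>c\<in>C. \<Delta> c > 0"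
    and y: "\<forall>c\<in>C. \<Delta> c ^ 2 / (2 * real (card U)) \<ge> 2"
  shows "card (bucket_vector U a \<Delta> C ` {x\<in>sign_vectors U. bucket_cost U a \<Delta> C x \<le> T}) \<le> exp T"
proof (rule card_le_exp_of_bucket_weight_le[OF C y])
  define R where "R c = nat \<lceil>real (card U) / (2 * \<Delta> c)\<rceil> + 1" for c
  show "bucket_vector U a \<Delta> C ` {x\<in>sign_vectors U. bucket_cost U a \<Delta> C x \<le> T}
      \<subseteq> PiE C (\<lambda>c. {-int (R c)..int (R c)})"
  proof (rule image_subsetI)
    fix x assume "x \<in> {x\<in>sign_vectors U. bucket_cost U a \<Delta> C x \<le> T}"
    hence bnd: "\<bar>bucket U (a c) (\<Delta> c) x\<bar> \<le> int (R c)" if "c \<in> C" for c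
      using a \<Delta> that unfolding R_def by (intro abs_bucket_le) auto
    have "bucket U (a c) (\<Delta> c) x \<in> {-int (R c)..int (R c)}" if "c \<in> C" for c
      using bnd[OF that] unfolding abs_le_iff atLeastAtMost_iff by linarith
    thus "bucket_vector U a \<Delta> C x \<in> PiE C (\<lambda>c. {-int (R c)..int (R c)})"
      unfolding bucket_vector_def restrict_PiE_iff by blast
  qed
qed (auto simp: bucket_vector_def bucket_cost_def)

lemma exists_large_bucket_class:
  fixes a :: "'c \<Rightarrow> 'a \<Rightarrow> real" and \<Delta> :: "'c \<Rightarrow> real"
  assumes U: "finite U" "card U > 0" and C: "finite C"
    and a: "\<forall>c\<in>C. \<forall>j\<in>U. \<bar>a c j\<bar> \<le> 1" and \<Delta>: "\<forall>c\<in>C. \<Delta> c > 0"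
    and y: "\<forall>c\<in>C. \<Delta> c ^ 2 / (2 * real (card U)) \<ge> 2"
  shows "\<exists>F\<subseteq>sign_vectors U. 2 ^ (card U - 1) * exp (- 2 * entropy_budget U \<Delta> C) \<le> card F \<and>
           (\<forall>x\<in>F. \<forall>x'\<in>F. bucket_vector U a \<Delta> C x = bucket_vector U a \<Delta> C x')"
proof -
  define E where "E = entropy_budget U \<Delta> C"
  define G where "G = {x\<in>sign_vectors U. bucket_cost U a \<Delta> C x \<le> 2 * E}"
  let ?f = "bucket_vector U a \<Delta> C"
  have cardG: "2 ^ (card U - 1) \<le> real (card G)"
    unfolding G_def E_def by (rule card_low_bucket_cost_ge[OF U a \<Delta> y])
  have image: "card (?f ` G) \<le> exp (2 * E)"
    unfolding G_def by (rule card_bucket_vectors_le[OF C a \<Delta> y])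
  have "finite G"
    using U(1) by (simp add: G_def finite_sign_vectors)
  moreover have "G \<noteq> {}"
  proof
    assume "G = {}"
    with cardG have "(2::real) ^ (card U - 1) \<le> 0"
      by simp
    thus False
      using zero_less_power[of "2::real" "card U - 1"] by linarith
  qed
  ultimately obtain \<beta> where \<beta>: "card G \<le> card (?f -` {\<beta>} \<inter> G) * card (?f ` G)"
    using pigeonhole_card[of ?f G "?f ` G"] by auto
  define F where "F = ?f -` {\<beta>} \<inter> G"
  have "2 ^ (card U - 1) \<le> real (card F) * card (?f ` G)"
    using cardG \<beta> unfolding F_def of_nat_mult[symmetric] of_nat_le_iff by linarith
  also have "\<dots> \<le> real (card F) * exp (2 * E)"
    using image by (intro mult_left_mono) auto
  finally have "2 ^ (card U - 1) * exp (- 2 * E) \<le> card F"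
    by (simp add: exp_minus field_simps)
  moreover have "F \<subseteq> sign_vectors U"
    by (auto simp: F_def G_def)
  ultimately show ?thesis
    unfolding E_def by (intro exI[of _ F]) (auto simp: F_def)
qed

lemma abs_signed_sum_diff_lt_of_bucket_eq:
  assumes "\<Delta> > 0" "bucket U a \<Delta> x = bucket U a \<Delta> x'"
  shows "\<bar>(\<Sum>j\<in>U. a j * x j) - (\<Sum>j\<in>U. a j * x' j)\<bar> < 2 * \<Delta>"
proof -
  have "\<bar>(\<Sum>j\<in>U. a j * x j) / (2 * \<Delta>) - (\<Sum>j\<in>U. a j * x' j) / (2 * \<Delta>)\<bar> < 1"
    using assms(2) unfolding bucket_def by linarith
  thus ?thesis
    using assms(1) by (simp add: diff_divide_distrib[symmetric] abs_divide pos_divide_less_eq)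
qed

lemma partial_colouring:
  fixes a :: "'c \<Rightarrow> 'a \<Rightarrow> real" and \<Delta> :: "'c \<Rightarrow> real"
  assumes U: "finite U" "card U > 0" and C: "finite C"
    and a: "\<forall>c\<in>C. \<forall>j\<in>U. \<bar>a c j\<bar> \<le> 1" and \<Delta>: "\<forall>c\<in>C. \<Delta> c > 0"
    and y: "\<forall>c\<in>C. \<Delta> c ^ 2 / (2 * real (card U)) \<ge> 2"
    and entropy: "(3/2) ^ card U * 2 powr (real (card U) / 3)
       < 2 ^ (card U - 1) * exp (- 2 * entropy_budget U \<Delta> C)"
  shows "\<exists>z\<in>PiE U (\<lambda>_. {-1, 0, 1}). card U \<le> 3 * card {j\<in>U. z j \<noteq> 0} \<and>
           (\<forall>c\<in>C. \<bar>\<Sum>j\<in>U. a c j * z j\<bar> \<le> \<Delta> c)"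
proof -
  obtain F where F: "F \<subseteq> sign_vectors U" "2 ^ (card U - 1) * exp (- 2 * entropy_budget U \<Delta> C) \<le> card F"
    and same: "\<forall>x\<in>F. \<forall>x'\<in>F. bucket_vector U a \<Delta> C x = bucket_vector U a \<Delta> C x'"
    using exists_large_bucket_class[OF U C a \<Delta> y] by blast
  have "(3/2) ^ card U * 2 powr (real (card U) / 3) < card F"
    using entropy F(2) by linarith
  then obtain x x' where "x \<in> F" "x' \<in> F" and far: "card U \<le> 3 * card {j\<in>U. x' j \<noteq> x j}"
    using exists_far_pair[OF U(1) F(1)] by blast
  hence xx': "x \<in> sign_vectors U" "x' \<in> sign_vectors U"
    using F(1) by auto
  define z where "z = restrict (\<lambda>j. (x j - x' j) / 2) U"
  have "(x j - x' j) / 2 \<in> {-1, 0, 1}" if "j \<in> U" for j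
  proof -
    have "x j \<in> {-1, 1}" "x' j \<in> {-1, 1}"
      using xx' that by (auto simp: sign_vectors_def PiE_iff)
    thus ?thesis
      by auto
  qed
  hence zPi: "z \<in> PiE U (\<lambda>_. {-1, 0, 1})"
    by (simp add: z_def)
  have nonzero: "{j\<in>U. z j \<noteq> 0} = {j\<in>U. x' j \<noteq> x j}"
    by (auto simp: z_def)
  have "\<bar>\<Sum>j\<in>U. a c j * z j\<bar> \<le> \<Delta> c" if "c \<in> C" for c
  proof -
    have "(\<Sum>j\<in>U. a c j * z j) = (\<Sum>j\<in>U. (a c j * x j - a c j * x' j) / 2)"
      by (intro sum.cong) (simp_all add: z_def right_diff_distrib)
    also have "\<dots> = ((\<Sum>j\<in>U. a c j * x j) - (\<Sum>j\<in>U. a c j * x' j)) / 2"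
      by (simp add: sum_divide_distrib[symmetric] sum_subtractf)
    finally have eq: "(\<Sum>j\<in>U. a c j * z j) = ((\<Sum>j\<in>U. a c j * x j) - (\<Sum>j\<in>U. a c j * x' j)) / 2" .
    have "bucket_vector U a \<Delta> C x c = bucket_vector U a \<Delta> C x' c"
      using bspec[OF bspec[OF same \<open>x \<in> F\<close>] \<open>x' \<in> F\<close>] by simp
    hence "bucket U (a c) (\<Delta> c) x = bucket U (a c) (\<Delta> c) x'"
      using that by (simp add: bucket_vector_def)
    hence "\<bar>(\<Sum>j\<in>U. a c j * x j) - (\<Sum>j\<in>U. a c j * x' j)\<bar> < 2 * \<Delta> c"
      by (rule abs_signed_sum_diff_lt_of_bucket_eq[rotated]) (use \<Delta> that in simp)
    thus ?thesis
      unfolding eq by (simp add: field_simps)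
  qed
  thus ?thesis
    using zPi far unfolding nonzero[symmetric] by blast
qed

section \<open>Hereditary and linear discrepancy\<close>

lemma exists_round_index:
  fixes N m :: real
  assumes "m \<ge> 1" "m \<le> N * (2/3) ^ r"
  shows "\<exists>r'\<ge>r. N * (2/3) ^ Suc r' < m \<and> m \<le> N * (2/3) ^ r'"
proof -
  define P where "P i \<longleftrightarrow> r \<le> i \<and> N * (2/3) ^ i < m" for i
  have "N > 0"
    using assms mult_nonpos_nonneg[of N "(2/3::real) ^ r"] by (cases "N > 0") auto
  then obtain k where k: "(2/3::real) ^ k < 1 / N"
    using real_arch_pow_inv[of "1 / N" "2/3::real"] by auto
  have "N * (2/3) ^ max k r \<le> N * (2/3) ^ k"
    using \<open>N > 0\<close> by (intro mult_left_mono power_decreasing) auto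
  also have "\<dots> < 1"
    using k \<open>N > 0\<close> by (simp add: pos_less_divide_eq mult.commute)
  finally have "N * (2/3) ^ max k r < 1" .
  hence "P (max k r)"
    using assms(1) by (simp add: P_def)
  hence P: "P (LEAST i. P i)"
    by (rule LeastI)
  moreover have "(LEAST i. P i) \<noteq> r"
    using P assms(2) by (auto simp: P_def)
  ultimately obtain r' where r': "(LEAST i. P i) = Suc r'" "r \<le> r'"
    by (cases "LEAST i. P i") (auto simp: P_def)
  moreover have "\<not> P r'"
    using not_less_Least[of r' P] r'(1) by simp
  ultimately show ?thesis
    using P by (auto simp: P_def not_less)
qed

lemma merge_partial_colouring:
  assumes "finite W" "z \<in> PiE W (\<lambda>_. {-1, 0, 1})" "x \<in> sign_vectors {j\<in>W. z j = 0}"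
  shows "\<exists>x'\<in>sign_vectors W. \<forall>a.
           \<bar>\<Sum>j\<in>W. a j * x' j\<bar> \<le> \<bar>\<Sum>j\<in>{j\<in>W. z j = 0}. a j * x j\<bar> + \<bar>\<Sum>j\<in>W. a j * z j\<bar>"
proof
  define x' where "x' = restrict (\<lambda>j. if z j = 0 then x j else z j) W"
  show "x' \<in> sign_vectors W"
    using assms(2,3) by (auto simp: x'_def sign_vectors_def PiE_iff)
  show "\<forall>a. \<bar>\<Sum>j\<in>W. a j * x' j\<bar> \<le> \<bar>\<Sum>j\<in>{j\<in>W. z j = 0}. a j * x j\<bar> + \<bar>\<Sum>j\<in>W. a j * z j\<bar>"
  proof
    fix a :: "'a \<Rightarrow> real"
    have "(\<Sum>j\<in>W. a j * x' j) = (\<Sum>j\<in>W. (if z j = 0 then a j * x j else 0) + a j * z j)"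
      by (intro sum.cong) (auto simp: x'_def)
    also have "\<dots> = (\<Sum>j\<in>{j\<in>W. z j = 0}. a j * x j) + (\<Sum>j\<in>W. a j * z j)"
      using assms(1) by (simp add: sum.distrib sum.inter_filter)
    finally show "\<bar>\<Sum>j\<in>W. a j * x' j\<bar> \<le> \<bar>\<Sum>j\<in>{j\<in>W. z j = 0}. a j * x j\<bar> + \<bar>\<Sum>j\<in>W. a j * z j\<bar>"
      by (simp only: abs_triangle_ineq)
  qed
qed

(* Each round colours at least a third of the remaining coordinates, so the round index r
   grows while the slack Delta c * sigma^r shrinks geometrically; fewer than M coordinates are
   coloured arbitrarily. *)
lemma colouring_from_partial_colourings:
  fixes a :: "'c \<Rightarrow> 'a \<Rightarrow> real" and \<Delta> :: "'c \<Rightarrow> real" and N M \<sigma> :: real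
  assumes a: "\<forall>c\<in>C. \<forall>j\<in>J. \<bar>a c j\<bar> \<le> 1" and \<Delta>: "\<forall>c\<in>C. \<Delta> c \<ge> 0"
    and \<sigma>: "0 < \<sigma>" "\<sigma> < 1" and M: "M \<ge> 1"
    and partial: "\<And>W r. W \<subseteq> J \<Longrightarrow> finite W \<Longrightarrow> M \<le> card W \<Longrightarrow>
       N * (2/3) ^ Suc r < card W \<Longrightarrow> card W \<le> N * (2/3) ^ r \<Longrightarrow>
       \<exists>z\<in>PiE W (\<lambda>_. {-1, 0, 1}). card W \<le> 3 * card {j\<in>W. z j \<noteq> 0} \<and>
         (\<forall>c\<in>C. \<bar>\<Sum>j\<in>W. a c j * z j\<bar> \<le> \<Delta> c * \<sigma> ^ r)"
  shows "W \<subseteq> J \<Longrightarrow> finite W \<Longrightarrow> card W \<le> N * (2/3) ^ r \<Longrightarrow>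
     \<exists>x\<in>sign_vectors W. \<forall>c\<in>C. \<bar>\<Sum>j\<in>W. a c j * x j\<bar> \<le> \<Delta> c * \<sigma> ^ r / (1 - \<sigma>) + M"
proof (induction "card W" arbitrary: W r rule: less_induct)
  case less
  have geom: "0 \<le> \<Delta> c * \<sigma> ^ r / (1 - \<sigma>)" if "c \<in> C" for c
    using \<Delta> \<sigma> that by simp
  show ?case
  proof (cases "card W < M")
    case True
    define x where "x = restrict (\<lambda>_. 1::real) W"
    have "x \<in> sign_vectors W"
      by (simp add: x_def sign_vectors_def)
    moreover have "\<bar>\<Sum>j\<in>W. a c j * x j\<bar> \<le> \<Delta> c * \<sigma> ^ r / (1 - \<sigma>) + M" if "c \<in> C" for c
    proof -
      have "\<bar>\<Sum>j\<in>W. a c j * x j\<bar> \<le> real (card W) * 1"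
        using a that less.prems(1) sign_vectors_abs_eq_1[OF \<open>x \<in> sign_vectors W\<close>]
        by (intro abs_sum_mult_le) auto
      thus ?thesis
        using True geom[OF that] by linarith
    qed
    ultimately show ?thesis
      by blast
  next
    case False
    obtain r' where r': "r \<le> r'" "N * (2/3) ^ Suc r' < card W" "card W \<le> N * (2/3) ^ r'"
      using exists_round_index[of "card W" N r] False M less.prems(3) by auto
    obtain z where z: "z \<in> PiE W (\<lambda>_. {-1, 0, 1})" "card W \<le> 3 * card {j\<in>W. z j \<noteq> 0}"
      and disc_z: "\<forall>c\<in>C. \<bar>\<Sum>j\<in>W. a c j * z j\<bar> \<le> \<Delta> c * \<sigma> ^ r'"
      using partial[OF less.prems(1,2) _ r'(2,3)] False by auto
    define W' where "W' = {j\<in>W. z j = 0}"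
    have "card W = card (W' \<union> {j\<in>W. z j \<noteq> 0})"
      by (rule arg_cong[where f = card]) (auto simp: W'_def)
    also have "\<dots> = card W' + card {j\<in>W. z j \<noteq> 0}"
      using less.prems(2) by (intro card_Un_disjoint) (auto simp: W'_def)
    finally have card_W: "card W = card W' + card {j\<in>W. z j \<noteq> 0}" .
    hence "card W' \<le> N * (2/3) ^ Suc r'"
      using z(2) r'(3) by simp
    moreover have "card W' < card W"
      using card_W z(2) False M by linarith
    ultimately obtain x where x: "x \<in> sign_vectors W'"
      and disc_x: "\<forall>c\<in>C. \<bar>\<Sum>j\<in>W'. a c j * x j\<bar> \<le> \<Delta> c * \<sigma> ^ Suc r' / (1 - \<sigma>) + M"
      using less.hyps[of W' "Suc r'"] less.prems(1,2) by (auto simp: W'_def)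
    obtain x' where x': "x' \<in> sign_vectors W"
      and merged: "\<And>a. \<bar>\<Sum>j\<in>W. a j * x' j\<bar> \<le> \<bar>\<Sum>j\<in>W'. a j * x j\<bar> + \<bar>\<Sum>j\<in>W. a j * z j\<bar>"
      using merge_partial_colouring[OF less.prems(2) z(1) x[unfolded W'_def]] W'_def by blast
    have "\<bar>\<Sum>j\<in>W. a c j * x' j\<bar> \<le> \<Delta> c * \<sigma> ^ r / (1 - \<sigma>) + M" if "c \<in> C" for c
    proof -
      have "\<bar>\<Sum>j\<in>W. a c j * x' j\<bar> \<le> (\<Delta> c * \<sigma> ^ Suc r' / (1 - \<sigma>) + M) + \<Delta> c * \<sigma> ^ r'"
        using merged[of "a c"] bspec[OF disc_x that] bspec[OF disc_z that] by linarith
      also have "\<dots> = \<Delta> c * \<sigma> ^ r' / (1 - \<sigma>) + M"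
        using \<sigma> by (simp add: field_simps)
      also have "\<dots> \<le> \<Delta> c * \<sigma> ^ r / (1 - \<sigma>) + M"
        using \<sigma> \<Delta> that r'(1) by (auto intro!: divide_right_mono mult_left_mono power_decreasing)
      finally show ?thesis .
    qed
    thus ?thesis
      using x' by blast
  qed
qed

(* The last binary digit of k j / 2^(p+1) is removed by colouring the coordinates where it
   is 1 (Lovasz, Spencer and Vesztergombi). *)
lemma dyadic_halving_step:
  fixes a :: "'c \<Rightarrow> 'a \<Rightarrow> real" and k :: "'a \<Rightarrow> nat"
  assumes J: "finite J"
    and herd: "\<And>U. U \<subseteq> J \<Longrightarrow> \<exists>x\<in>sign_vectors U. \<forall>c\<in>C. \<bar>\<Sum>j\<in>U. a c j * x j\<bar> \<le> D c"
    and k: "\<forall>j\<in>J. k j \<le> 2 ^ Suc p"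
  shows "\<exists>k'. (\<forall>j\<in>J. k' j \<le> 2 ^ p) \<and>
           (\<forall>c\<in>C. \<bar>\<Sum>j\<in>J. (real (k' j) / 2 ^ p - real (k j) / 2 ^ Suc p) * a c j\<bar> \<le> D c / 2 ^ Suc p)"
proof -
  define S where "S = {j\<in>J. odd (k j)}"
  obtain x where x: "x \<in> sign_vectors S" and disc: "\<forall>c\<in>C. \<bar>\<Sum>j\<in>S. a c j * x j\<bar> \<le> D c"
    using herd[of S] by (auto simp: S_def)
  define k' where "k' j = (if j \<in> S \<and> x j = 1 then k j div 2 + 1 else k j div 2)" for j
  have k'_le: "k' j \<le> 2 ^ p" if "j \<in> J" for j
  proof (cases "j \<in> S \<and> x j = 1")
    case True
    hence "k j \<noteq> 2 ^ Suc p"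
      by (auto simp: S_def)
    thus ?thesis
      using True k that by (auto simp: k'_def S_def elim!: oddE)
  next
    case False
    hence "k' j = k j div 2"
      by (simp add: k'_def)
    thus ?thesis
      using k that div_le_mono[of "k j" "2 ^ Suc p" 2] by simp
  qed
  have diff_eq: "real (k' j) / 2 ^ p - real (k j) / 2 ^ Suc p = (if j \<in> S then x j / 2 ^ Suc p else 0)"
    if j: "j \<in> J" for j
  proof (cases "j \<in> S")
    case True
    then obtain q where q: "k j = 2 * q + 1"
      by (auto simp: S_def elim: oddE)
    have "x j = 1 \<or> x j = -1"
      using x True by (auto simp: sign_vectors_def PiE_iff)
    thus ?thesis
      using True q by (auto simp: k'_def field_simps)
  next
    case False
    hence "even (k j)"
      using j by (simp add: S_def)
    then obtain q where "k j = 2 * q"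
      by (rule evenE)
    thus ?thesis
      using False by (simp add: k'_def field_simps)
  qed
  have "(\<Sum>j\<in>J. (real (k' j) / 2 ^ p - real (k j) / 2 ^ Suc p) * a c j)
           = (\<Sum>j\<in>S. a c j * x j) / 2 ^ Suc p" for c
  proof -
    have "(\<Sum>j\<in>J. (real (k' j) / 2 ^ p - real (k j) / 2 ^ Suc p) * a c j)
           = (\<Sum>j\<in>J. if j \<in> S then a c j * x j / 2 ^ Suc p else 0)"
      using diff_eq by (intro sum.cong) auto
    also have "\<dots> = (\<Sum>j\<in>S. a c j * x j) / 2 ^ Suc p"
      unfolding S_def sum_divide_distrib sum.inter_filter[OF J] by (intro sum.cong) auto
    finally show ?thesis .
  qed
  hence "\<forall>c\<in>C. \<bar>\<Sum>j\<in>J. (real (k' j) / 2 ^ p - real (k j) / 2 ^ Suc p) * a c j\<bar> \<le> D c / 2 ^ Suc p"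
    using disc by (simp add: abs_divide divide_right_mono)
  thus ?thesis
    using k'_le by blast
qed

lemma linear_discrepancy_dyadic:
  fixes a :: "'c \<Rightarrow> 'a \<Rightarrow> real" and k :: "'a \<Rightarrow> nat"
  assumes J: "finite J"
    and herd: "\<And>U. U \<subseteq> J \<Longrightarrow> \<exists>x\<in>sign_vectors U. \<forall>c\<in>C. \<bar>\<Sum>j\<in>U. a c j * x j\<bar> \<le> D c"
  shows "\<forall>j\<in>J. k j \<le> 2 ^ p \<Longrightarrow> \<exists>\<epsilon>. (\<forall>j\<in>J. \<epsilon> j \<in> {-1, 1}) \<and>
     (\<forall>c\<in>C. \<bar>\<Sum>j\<in>J. (\<epsilon> j - (2 * real (k j) / 2 ^ p - 1)) * a c j\<bar> \<le> 2 * D c * (1 - 1 / 2 ^ p))"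
proof (induction p arbitrary: k)
  case 0
  have "2 * real (k j) - 1 \<in> {-1, 1}" if "j \<in> J" for j
    using 0 that by (auto simp: le_Suc_eq)
  thus ?case
    by (intro exI[of _ "\<lambda>j. 2 * real (k j) - 1"]) simp
next
  case (Suc p)
  obtain k' where k': "\<forall>j\<in>J. k' j \<le> 2 ^ p"
    and step: "\<forall>c\<in>C. \<bar>\<Sum>j\<in>J. (real (k' j) / 2 ^ p - real (k j) / 2 ^ Suc p) * a c j\<bar> \<le> D c / 2 ^ Suc p"
    using dyadic_halving_step[OF J herd Suc.prems] by blast
  obtain \<epsilon> where \<epsilon>: "\<forall>j\<in>J. \<epsilon> j \<in> {-1, 1}"
    and disc: "\<forall>c\<in>C. \<bar>\<Sum>j\<in>J. (\<epsilon> j - (2 * real (k' j) / 2 ^ p - 1)) * a c j\<bar> \<le> 2 * D c * (1 - 1 / 2 ^ p)"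
    using Suc.IH[OF k'] by blast
  have "\<bar>\<Sum>j\<in>J. (\<epsilon> j - (2 * real (k j) / 2 ^ Suc p - 1)) * a c j\<bar> \<le> 2 * D c * (1 - 1 / 2 ^ Suc p)"
    if "c \<in> C" for c
  proof -
    have "(\<Sum>j\<in>J. (\<epsilon> j - (2 * real (k j) / 2 ^ Suc p - 1)) * a c j)
        = (\<Sum>j\<in>J. (\<epsilon> j - (2 * real (k' j) / 2 ^ p - 1)) * a c j)
          + 2 * (\<Sum>j\<in>J. (real (k' j) / 2 ^ p - real (k j) / 2 ^ Suc p) * a c j)"
      by (simp add: sum_distrib_left sum.distrib[symmetric] algebra_simps)
    hence "\<bar>\<Sum>j\<in>J. (\<epsilon> j - (2 * real (k j) / 2 ^ Suc p - 1)) * a c j\<bar>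
        \<le> 2 * D c * (1 - 1 / 2 ^ p) + 2 * (D c / 2 ^ Suc p)"
      using bspec[OF disc that] bspec[OF step that] abs_triangle_ineq by (smt (verit))
    also have "\<dots> = 2 * D c * (1 - 1 / 2 ^ Suc p)"
      by (simp add: field_simps)
    finally show ?thesis .
  qed
  thus ?case
    using \<epsilon> by blast
qed

lemma exists_dyadic_approximation:
  fixes x :: real
  assumes "\<bar>x\<bar> \<le> 1"
  shows "\<exists>k::nat. k \<le> 2 ^ p \<and> \<bar>2 * real k / 2 ^ p - 1 - x\<bar> \<le> 2 / 2 ^ p"
proof (intro exI conjI)
  define k where "k = nat \<lfloor>2 ^ p * (1 + x) / 2\<rfloor>"
  have "0 \<le> 2 ^ p * (1 + x) / 2" "2 ^ p * (1 + x) / 2 \<le> 2 ^ p"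
    using assms by (auto simp: abs_le_iff)
  moreover have "real k = of_int \<lfloor>2 ^ p * (1 + x) / 2\<rfloor>"
    using calculation(1) by (simp add: k_def)
  ultimately have k: "real k \<le> 2 ^ p * (1 + x) / 2" "2 ^ p * (1 + x) / 2 < real k + 1" "real k \<le> 2 ^ p"
    by linarith+
  thus "k \<le> 2 ^ p"
    by (simp flip: of_nat_le_iff)
  have "2 * real k / 2 ^ p - 1 - x = 2 * (real k - 2 ^ p * (1 + x) / 2) / 2 ^ p"
    by (simp add: field_simps)
  thus "\<bar>2 * real k / 2 ^ p - 1 - x\<bar> \<le> 2 / 2 ^ p"
    using k(1,2) by (simp add: abs_divide divide_right_mono)
qed

lemma linear_discrepancy_le:
  fixes a :: "'c \<Rightarrow> 'a \<Rightarrow> real" and x :: "'a \<Rightarrow> real"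
  assumes J: "finite J"
    and herd: "\<And>U. U \<subseteq> J \<Longrightarrow> \<exists>x\<in>sign_vectors U. \<forall>c\<in>C. \<bar>\<Sum>j\<in>U. a c j * x j\<bar> \<le> D c"
    and a: "\<forall>c\<in>C. \<forall>j\<in>J. \<bar>a c j\<bar> \<le> 1" and x: "\<forall>j\<in>J. \<bar>x j\<bar> \<le> 1" and "\<delta> > 0"
  shows "\<exists>\<epsilon>. (\<forall>j\<in>J. \<epsilon> j \<in> {-1, 1}) \<and> (\<forall>c\<in>C. \<bar>\<Sum>j\<in>J. (\<epsilon> j - x j) * a c j\<bar> \<le> 2 * D c + \<delta>)"
proof -
  obtain p where p: "(1/2::real) ^ p < \<delta> / (2 * card J + 1)"
    using real_arch_pow_inv[of "\<delta> / (2 * card J + 1)" "1/2::real"] \<open>\<delta> > 0\<close> by auto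
  have "\<forall>j\<in>J. \<exists>k. k \<le> 2 ^ p \<and> \<bar>2 * real k / 2 ^ p - 1 - x j\<bar> \<le> 2 / 2 ^ p"
    using x exists_dyadic_approximation by blast
  then obtain k where k: "\<forall>j\<in>J. k j \<le> 2 ^ p \<and> \<bar>2 * real (k j) / 2 ^ p - 1 - x j\<bar> \<le> 2 / 2 ^ p"
    by (rule bchoice[THEN exE])
  hence "\<forall>j\<in>J. k j \<le> 2 ^ p"
    by blast
  then obtain \<epsilon> where \<epsilon>: "\<forall>j\<in>J. \<epsilon> j \<in> {-1, 1}"
    and disc: "\<forall>c\<in>C. \<bar>\<Sum>j\<in>J. (\<epsilon> j - (2 * real (k j) / 2 ^ p - 1)) * a c j\<bar> \<le> 2 * D c * (1 - 1 / 2 ^ p)"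
    using linear_discrepancy_dyadic[OF J herd] by blast
  have "\<bar>\<Sum>j\<in>J. (\<epsilon> j - x j) * a c j\<bar> \<le> 2 * D c + \<delta>" if "c \<in> C" for c
  proof -
    have "\<bar>\<Sum>j\<in>J. (2 * real (k j) / 2 ^ p - 1 - x j) * a c j\<bar> \<le> real (card J) * (2 / 2 ^ p)"
      using k a that by (intro abs_sum_mult_le) auto
    also have "\<dots> \<le> (2 * card J + 1) * (1/2) ^ p"
      by (simp add: power_one_over divide_right_mono)
    also have "\<dots> \<le> \<delta>"
      using p by (simp add: pos_less_divide_eq mult.commute)
    finally have "\<bar>\<Sum>j\<in>J. (2 * real (k j) / 2 ^ p - 1 - x j) * a c j\<bar> \<le> \<delta>" .
    moreover have "(\<Sum>j\<in>J. (\<epsilon> j - x j) * a c j)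
        = (\<Sum>j\<in>J. (\<epsilon> j - (2 * real (k j) / 2 ^ p - 1)) * a c j) + (\<Sum>j\<in>J. (2 * real (k j) / 2 ^ p - 1 - x j) * a c j)"
      by (simp add: sum.distrib[symmetric] algebra_simps)
    moreover have "2 * D c * (1 - 1 / 2 ^ p) \<le> 2 * D c"
      using herd[of "{}"] that by (intro mult_left_le) auto
    ultimately show ?thesis
      using bspec[OF disc that] abs_triangle_ineq by (smt (verit))
  qed
  thus ?thesis
    using \<epsilon> by blast
qed

section \<open>Numerical estimates for the derivative constraints\<close>

lemma ln_three_halves_le: "ln (3/2::real) \<le> 41/100"
proof -
  have "(3/2::real) \<le> (1 + (41/100) / real (64::nat)) ^ 64"
    by (simp add: power_divide)
  also have "\<dots> \<le> exp (41/100)"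
    by (rule exp_ge_one_plus_x_over_n_power_n) auto
  finally show ?thesis
    by (metis exp_le_cancel_iff exp_ln zero_less_divide_iff zero_less_numeral)
qed

lemma exp_neg_25_halves_le: "exp (- 25/2 :: real) \<le> 1 / 130000"
proof -
  have "(130000::real) \<le> (1 + (25/2) / real (100::nat)) ^ 100"
    by (simp add: power_divide)
  also have "\<dots> \<le> exp (25/2)"
    by (rule exp_ge_one_plus_x_over_n_power_n) auto
  finally show ?thesis
    by (simp add: exp_minus field_simps)
qed

lemma exp_neg_mult_le_inverse_power:
  assumes "b > 0" "ln b \<le> a"
  shows "exp (- (a * real l)) \<le> (1 / b) ^ l"
proof -
  have "exp (- (a * real l)) \<le> exp (- (ln b * real l))"
    using assms(2) by (simp add: mult_right_mono)
  also have "exp (ln b * real l) = b ^ l"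
    using assms(1) by (simp add: exp_of_nat_mult mult.commute)
  hence "exp (- (ln b * real l)) = (1 / b) ^ l"
    by (simp add: exp_minus power_one_over inverse_eq_divide)
  finally show ?thesis .
qed

lemma bucket_weight_bound_antimono:
  assumes "0 \<le> Y" "Y \<le> y"
  shows "bucket_weight_bound y \<le> bucket_weight_bound Y"
proof -
  have "2 * (y - Y) \<le> (2 * Y + 8) * (y - Y)"
    using assms by (intro mult_right_mono) auto
  hence "2 * y + 8 \<le> (2 * Y + 8) * (1 + (y - Y))"
    by (simp add: algebra_simps)
  also have "\<dots> \<le> (2 * Y + 8) * exp (y - Y)"
    using assms by (intro mult_left_mono exp_ge_add_one_self) auto
  finally have "bucket_weight_bound y \<le> exp (- y) * ((2 * Y + 8) * exp (y - Y))"
    unfolding bucket_weight_bound_def by (intro mult_left_mono) auto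
  also have "\<dots> = exp (- y) * exp (y - Y) * (2 * Y + 8)"
    by (simp only: ac_simps)
  also have "exp (- y) * exp (y - Y) = exp (- Y)"
    by (simp flip: exp_add)
  finally show ?thesis
    by (simp add: bucket_weight_bound_def)
qed

lemma bucket_weight_bound_le:
  "bucket_weight_bound (25/2 + (25/32) * real l + (25/48) * real r)
     \<le> 33 * exp (- 25/2) * (1/2) ^ l * (2/3) ^ r"
proof -
  define u where "u = (25/32) * real l + (25/48) * real r"
  have "2 * (25/2 + u) + 8 \<le> 33 * (1 + u / 16)"
    by (simp add: u_def)
  also have "\<dots> \<le> 33 * exp (u / 16)"
    by (intro mult_left_mono exp_ge_add_one_self) auto
  finally have "bucket_weight_bound (25/2 + u) \<le> exp (- (25/2 + u)) * (33 * exp (u / 16))"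
    unfolding bucket_weight_bound_def by (intro mult_left_mono) auto
  also have "exp (- (25/2 + u)) = exp (- 25/2) * exp (- u)"
    by (simp flip: exp_add)
  also have "exp (- 25/2) * exp (- u) * (33 * exp (u / 16)) = 33 * exp (- 25/2) * (exp (- u) * exp (u / 16))"
    by (simp only: ac_simps)
  also have "exp (- u) * exp (u / 16) = exp (- ((375/512) * real l)) * exp (- ((375/768) * real r))"
    by (simp add: u_def flip: exp_add) (simp add: algebra_simps)
  also have "\<dots> \<le> (1/2) ^ l * (1 / (3/2)) ^ r"
    using ln2_le_25_over_36 ln_three_halves_le
    by (intro mult_mono exp_neg_mult_le_inverse_power) auto
  finally show ?thesis
    by (simp add: u_def mult_ac add.assoc)
qed

(* Slack factor of the constraint for the derivative of order snd c; its linear growth makes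
   the code lengths of all orders sum to a geometric series. *)
definition slack_weight :: "nat \<times> nat \<Rightarrow> real" where
  "slack_weight c = 1 + real (snd c) / 32"

lemma slack_exponent_ge:
  assumes m: "real m > 0" "real m \<le> real n * (2/3) ^ r"
  shows "((1 + real l / 32) * (5 * sqrt n) * (5/6) ^ r)\<^sup>2 / (2 * real m)
           \<ge> 25/2 + (25/32) * real l + (25/48) * real r"
proof -
  have "(3/2) ^ r * real m \<le> (3/2) ^ r * (real n * (2/3) ^ r)"
    using m by (intro mult_left_mono) auto
  hence nm: "(3/2) ^ r \<le> real n / real m"
    using m by (simp add: field_simps flip: power_mult_distrib)
  have "25/2 + (25/32) * real l + (25/48) * real r \<le> 25/2 * ((1 + real l / 16) * (1 + real r / 24))"
    by (simp add: field_simps)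
  also have "\<dots> \<le> 25/2 * ((1 + real l / 32)\<^sup>2 * (1 + 1/24) ^ r)"
    using Bernoulli_inequality[of "1/24::real" r]
    by (intro mult_left_mono mult_mono) (auto simp: power2_eq_square field_simps)
  also have "\<dots> = 25/2 * (1 + real l / 32)\<^sup>2 * (25/36) ^ r * (3/2) ^ r"
    by (simp flip: power_mult_distrib)
  also have "\<dots> \<le> 25/2 * (1 + real l / 32)\<^sup>2 * (25/36) ^ r * (real n / real m)"
    using nm by (intro mult_left_mono) auto
  also have "\<dots> = ((1 + real l / 32) * (5 * sqrt n) * (5/6) ^ r)\<^sup>2 / (2 * real m)"
  proof -
    have "(5 * sqrt n)\<^sup>2 = 25 * real n" "((5/6::real) ^ r)\<^sup>2 = (25/36) ^ r"
      by (simp_all add: power_mult_distrib power2_eq_square flip: power_mult_distrib)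
    hence "((1 + real l / 32) * (5 * sqrt n) * (5/6) ^ r)\<^sup>2 = (1 + real l / 32)\<^sup>2 * (25 * real n) * (25/36) ^ r"
      by (simp only: power_mult_distrib)
    thus ?thesis
      using m by (simp add: field_simps)
  qed
  finally show ?thesis .
qed

lemma sum_bucket_weight_bound_le:
  fixes n m r :: nat
  assumes K: "finite K" "card K \<le> 16 * n" and m: "real m > 0" "real m \<le> real n * (2/3) ^ r"
  shows "(\<Sum>c\<in>K \<times> {..<L}. bucket_weight_bound ((slack_weight c * (5 * sqrt n) * (5/6) ^ r)\<^sup>2 / (2 * real m)))
           \<le> 1056 * exp (- 25/2) * (real n * (2/3) ^ r)"
proof -
  have "(\<Sum>c\<in>K \<times> {..<L}. bucket_weight_bound ((slack_weight c * (5 * sqrt n) * (5/6) ^ r)\<^sup>2 / (2 * real m)))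
      \<le> (\<Sum>c\<in>K \<times> {..<L}. 33 * exp (- 25/2) * (1/2) ^ snd c * (2/3) ^ r)"
  proof (rule sum_mono)
    fix c :: "nat \<times> nat"
    have "bucket_weight_bound ((slack_weight c * (5 * sqrt n) * (5/6) ^ r)\<^sup>2 / (2 * real m))
        \<le> bucket_weight_bound (25/2 + (25/32) * real (snd c) + (25/48) * real r)"
      using slack_exponent_ge[OF m, of "snd c"]
      by (intro bucket_weight_bound_antimono) (auto simp: slack_weight_def)
    also have "\<dots> \<le> 33 * exp (- 25/2) * (1/2) ^ snd c * (2/3) ^ r"
      by (rule bucket_weight_bound_le)
    finally show "bucket_weight_bound ((slack_weight c * (5 * sqrt n) * (5/6) ^ r)\<^sup>2 / (2 * real m))
        \<le> 33 * exp (- 25/2) * (1/2) ^ snd c * (2/3) ^ r" .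
  qed
  also have "\<dots> = real (card K) * (33 * exp (- 25/2) * (2/3) ^ r * (\<Sum>l<L. (1/2) ^ l))"
    by (simp add: sum.cartesian_product' sum_distrib_left sum_distrib_right mult_ac)
  also have "\<dots> \<le> (16 * real n) * (33 * exp (- 25/2) * (2/3) ^ r * 2)"
  proof (intro mult_mono mult_left_mono)
    show "(\<Sum>l<L. (1/2::real) ^ l) \<le> 2"
      by (simp add: sum_gp_strict)
  qed (use K(2) in \<open>auto intro!: sum_nonneg mult_nonneg_nonneg\<close>)
  finally show ?thesis
    by (simp add: mult_ac)
qed

lemma hamming_bound_lt_of_entropy_le:
  assumes m: "real m \<ge> 100" and E: "E \<le> real m / 80"
  shows "(3/2) ^ m * 2 powr (real m / 3) < 2 ^ (m - 1) * exp (- 2 * E)"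
proof -
  have "real m * ln (3/2) \<le> real m * (41/100)"
    using ln_three_halves_le by (intro mult_left_mono) auto
  moreover have "real m * (2/3) \<le> real m * ln 2"
    using ln2_ge_two_thirds by (intro mult_left_mono) auto
  moreover have "real (m - 1) * ln 2 = real m * ln 2 - ln 2"
    using m by (simp add: of_nat_diff algebra_simps)
  ultimately have "real m * ln (3/2) + real m / 3 * ln 2 < real (m - 1) * ln 2 - 2 * E"
    using m E ln2_le_25_over_36 by linarith
  hence "exp (real m * ln (3/2) + real m / 3 * ln 2) < exp (real (m - 1) * ln 2 - 2 * E)"
    by simp
  also have "exp (real (m - 1) * ln 2 - 2 * E) = 2 ^ (m - 1) * exp (- 2 * E)"
    by (simp add: exp_diff exp_of_nat_mult exp_minus divide_inverse)
  also have "exp (real m * ln (3/2) + real m / 3 * ln 2) = (3/2) ^ m * 2 powr (real m / 3)"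
    by (simp add: exp_add exp_of_nat_mult powr_def mult.commute)
  finally show ?thesis .
qed

lemma partial_colouring_slack_weight:
  fixes a :: "nat \<times> nat \<Rightarrow> 'a \<Rightarrow> real" and n r :: nat
  assumes K: "finite K" "card K \<le> 16 * n" and a: "\<forall>c\<in>K \<times> {..<L}. \<forall>j\<in>W. \<bar>a c j\<bar> \<le> 1"
    and W: "finite W" "100 \<le> card W" "n * (2/3) ^ Suc r < card W" "card W \<le> n * (2/3) ^ r"
  shows "\<exists>z\<in>PiE W (\<lambda>_. {-1, 0, 1}). card W \<le> 3 * card {j\<in>W. z j \<noteq> 0} \<and>
           (\<forall>c\<in>K \<times> {..<L}. \<bar>\<Sum>j\<in>W. a c j * z j\<bar> \<le> slack_weight c * (5 * sqrt n) * (5/6) ^ r)"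
proof (rule partial_colouring)
  define \<Delta> where "\<Delta> c = slack_weight c * (5 * sqrt n) * (5/6) ^ r" for c
  have m: "0 < real (card W)"
    using W(2) by simp
  have "n > 0"
    using W(2,4) by (cases n) auto
  thus "\<forall>c\<in>K \<times> {..<L}. \<Delta> c > 0"
    by (auto simp: \<Delta>_def slack_weight_def add_pos_nonneg)
  have y: "\<Delta> c ^ 2 / (2 * real (card W)) \<ge> 25/2 + (25/32) * real (snd c) + (25/48) * real r" for c
    using slack_exponent_ge[OF m W(4)] by (simp add: \<Delta>_def slack_weight_def)
  thus "\<forall>c\<in>K \<times> {..<L}. \<Delta> c ^ 2 / (2 * real (card W)) \<ge> 2"
    by (intro ballI order_trans[OF _ y]) auto
  have "(\<Sum>c\<in>K \<times> {..<L}. bucket_weight_bound (\<Delta> c ^ 2 / (2 * real (card W))))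
      \<le> 1056 * exp (- 25/2) * (real n * (2/3) ^ r)"
    unfolding \<Delta>_def by (rule sum_bucket_weight_bound_le[OF K m W(4)])
  also have "\<dots> \<le> 1056 * (1 / 130000) * (3/2 * real (card W))"
  proof -
    have "real n * (2/3) ^ r = 3/2 * (real n * (2/3) ^ Suc r)"
      by simp
    hence nr: "real n * (2/3) ^ r \<le> 3/2 * real (card W)"
      using W(3) by linarith
    have e: "1056 * exp (- 25/2) \<le> 1056 * (1 / 130000 :: real)"
      using exp_neg_25_halves_le by simp
    show ?thesis
      by (rule mult_mono[OF e nr]) simp_all
  qed
  finally show "(3/2) ^ card W * 2 powr (real (card W) / 3)
      < 2 ^ (card W - 1) * exp (- 2 * entropy_budget W \<Delta> (K \<times> {..<L}))"
    unfolding entropy_budget_def using W(2) by (intro hamming_bound_lt_of_entropy_le) auto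
qed (use K W a in auto)

lemma hereditary_discrepancy_slack_weight:
  fixes a :: "nat \<times> nat \<Rightarrow> 'a \<Rightarrow> real" and n :: nat
  assumes K: "finite K" "card K \<le> 16 * n" and J: "finite J" "card J \<le> n"
    and a: "\<forall>c\<in>K \<times> {..<L}. \<forall>j\<in>J. \<bar>a c j\<bar> \<le> 1" and "U \<subseteq> J"
  shows "\<exists>x\<in>sign_vectors U. \<forall>c\<in>K \<times> {..<L}. \<bar>\<Sum>j\<in>U. a c j * x j\<bar> \<le> 30 * slack_weight c * sqrt n + 100"
proof -
  have "\<exists>x\<in>sign_vectors U. \<forall>c\<in>K \<times> {..<L}.
          \<bar>\<Sum>j\<in>U. a c j * x j\<bar> \<le> slack_weight c * (5 * sqrt n) * (5/6) ^ 0 / (1 - 5/6) + 100"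
  proof (rule colouring_from_partial_colourings[where N = "real n"])
    fix W r
    assume "W \<subseteq> J" "finite W" "100 \<le> real (card W)"
      "real n * (2/3) ^ Suc r < real (card W)" "real (card W) \<le> real n * (2/3) ^ r"
    thus "\<exists>z\<in>PiE W (\<lambda>_. {-1, 0, 1}). card W \<le> 3 * card {j\<in>W. z j \<noteq> 0} \<and>
           (\<forall>c\<in>K \<times> {..<L}. \<bar>\<Sum>j\<in>W. a c j * z j\<bar> \<le> slack_weight c * (5 * sqrt n) * (5/6) ^ r)"
      using a by (intro partial_colouring_slack_weight K) auto
  next
    show "real (card U) \<le> real n * (2/3) ^ 0"
      using card_mono[OF J(1) \<open>U \<subseteq> J\<close>] J(2) by simp
  qed (use a \<open>U \<subseteq> J\<close> J(1) in \<open>auto simp: slack_weight_def intro: finite_subset\<close>)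
  thus ?thesis
    by (simp add: mult_ac)
qed

lemma exists_signs_uniformly_close:
  fixes a :: "nat \<times> nat \<Rightarrow> 'a \<Rightarrow> real" and e :: "'a \<Rightarrow> real" and n :: nat
  assumes n: "n \<ge> 1681" and K: "finite K" "card K \<le> 16 * n" and J: "finite J" "card J \<le> n"
    and a: "\<forall>k\<in>K. \<forall>l. \<forall>j\<in>J. \<bar>a (k, l) j\<bar> \<le> 1" and e: "\<forall>j\<in>J. \<bar>e j\<bar> \<le> 1"
  shows "\<exists>\<epsilon>. (\<forall>j\<in>J. \<epsilon> j \<in> {-1, 1}) \<and>
           (\<forall>k\<in>K. \<forall>l. \<bar>\<Sum>j\<in>J. (\<epsilon> j - e j) * a (k, l) j\<bar> \<le> (65 + 2 * real l) * sqrt n)"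
proof -
  define L where "L = nat \<lceil>sqrt n\<rceil>"
  have a': "\<forall>c\<in>K \<times> {..<L}. \<forall>j\<in>J. \<bar>a c j\<bar> \<le> 1"
    using a by auto
  obtain \<epsilon> where \<epsilon>: "\<forall>j\<in>J. \<epsilon> j \<in> {-1, 1}"
    and disc: "\<forall>c\<in>K \<times> {..<L}. \<bar>\<Sum>j\<in>J. (\<epsilon> j - e j) * a c j\<bar> \<le> 2 * (30 * slack_weight c * sqrt n + 100) + 1"
    using linear_discrepancy_le[OF J(1) hereditary_discrepancy_slack_weight[OF K J a'] a' e, of 1] by auto
  have "\<bar>\<Sum>j\<in>J. (\<epsilon> j - e j) * a (k, l) j\<bar> \<le> (65 + 2 * real l) * sqrt n" if "k \<in> K" for k l
  proof (cases "l < L")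
    case True
    have "41 \<le> sqrt n"
      using n real_sqrt_le_mono[of 1681 n] by simp
    have "\<bar>\<Sum>j\<in>J. (\<epsilon> j - e j) * a (k, l) j\<bar> \<le> 2 * (30 * slack_weight (k, l) * sqrt n + 100) + 1"
      using disc True that by simp
    also have "\<dots> = 60 * sqrt n + 15/8 * (real l * sqrt n) + 201"
      by (simp add: slack_weight_def algebra_simps)
    also have "\<dots> \<le> 65 * sqrt n + 2 * (real l * sqrt n)"
      using \<open>41 \<le> sqrt n\<close> mult_nonneg_nonneg[of "real l" "sqrt n"] by linarith
    also have "\<dots> = (65 + 2 * real l) * sqrt n"
      by (simp add: algebra_simps)
    finally show ?thesis .
  next
    case False
    have "\<bar>\<epsilon> j - e j\<bar> \<le> 2" if "j \<in> J" for j
      using \<epsilon> e that abs_triangle_ineq4[of "\<epsilon> j" "e j"] by fastforce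
    hence "\<bar>\<Sum>j\<in>J. (\<epsilon> j - e j) * a (k, l) j\<bar> \<le> real (card J) * 2"
      using a that by (intro abs_sum_mult_le) auto
    also have "\<dots> \<le> 2 * sqrt n * sqrt n"
      using J(2) by simp
    also have "\<dots> \<le> (65 + 2 * real l) * sqrt n"
    proof -
      have "sqrt n \<le> real l"
        using False unfolding L_def by linarith
      thus ?thesis
        by (intro mult_right_mono) auto
    qed
    finally show ?thesis .
  qed
  thus ?thesis
    using \<epsilon> by blast
qed

section \<open>Trigonometric sums\<close>

lemma higher_deriv_sin_sum:
  assumes "finite S"
  shows "(deriv ^^ l) (\<lambda>\<theta>. \<Sum>j\<in>S. c j * sin (real j * \<theta>)) =
         (\<lambda>\<theta>. \<Sum>j\<in>S. c j * real j ^ l * sin (real j * \<theta> + real l * pi / 2))"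
proof (induction l)
  case 0
  show ?case by simp
next
  case (Suc l)
  have "(deriv ^^ Suc l) (\<lambda>\<theta>. \<Sum>j\<in>S. c j * sin (real j * \<theta>)) =
        deriv (\<lambda>\<theta>. \<Sum>j\<in>S. c j * real j ^ l * sin (real j * \<theta> + real l * pi / 2))"
    using Suc.IH by simp
  also have "\<dots> = (\<lambda>\<theta>. \<Sum>j\<in>S. c j * real j ^ Suc l * sin (real j * \<theta> + real (Suc l) * pi / 2))"
  proof
    fix \<theta> :: real
    have "((\<lambda>\<theta>. \<Sum>j\<in>S. c j * real j ^ l * sin (real j * \<theta> + real l * pi / 2)) has_real_derivative
           (\<Sum>j\<in>S. c j * real j ^ l * (cos (real j * \<theta> + real l * pi / 2) * (real j * 1 + 0)))) (at \<theta>)"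
      by (auto intro!: derivative_eq_intros sum.cong simp: mult_ac)
    hence "deriv (\<lambda>\<theta>. \<Sum>j\<in>S. c j * real j ^ l * sin (real j * \<theta> + real l * pi / 2)) \<theta> =
           (\<Sum>j\<in>S. c j * real j ^ l * (cos (real j * \<theta> + real l * pi / 2) * (real j * 1 + 0)))"
      by (rule DERIV_imp_deriv)
    also have "\<dots> = (\<Sum>j\<in>S. c j * real j ^ Suc l * sin (real j * \<theta> + real (Suc l) * pi / 2))"
    proof (intro sum.cong refl)
      fix j
      have "sin (real j * \<theta> + real (Suc l) * pi / 2) = sin ((real j * \<theta> + real l * pi / 2) + pi / 2)"
        by (simp add: algebra_simps add_divide_distrib)
      also have "\<dots> = cos (real j * \<theta> + real l * pi / 2)" by (simp add: sin_add)
      finally show "c j * real j ^ l * (cos (real j * \<theta> + real l * pi / 2) * (real j * 1 + 0)) =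
            c j * real j ^ Suc l * sin (real j * \<theta> + real (Suc l) * pi / 2)" by simp
    qed
    finally show "deriv (\<lambda>\<theta>. \<Sum>j\<in>S. c j * real j ^ l * sin (real j * \<theta> + real l * pi / 2)) \<theta> =
           (\<Sum>j\<in>S. c j * real j ^ Suc l * sin (real j * \<theta> + real (Suc l) * pi / 2))" .
  qed
  finally show ?case .
qed

definition sample_point :: "nat \<Rightarrow> nat \<Rightarrow> real" where
  "sample_point n k = (2 * real k - 1) * pi / (4 * (16 * real n))"

(* The l-th derivative of sin (j theta) is j^l sin (j theta + l pi / 2); dividing by (2n)^l
   puts the coefficients in [-1, 1] for j <= 2n. *)
definition sin_coeff :: "nat \<Rightarrow> nat \<times> nat \<Rightarrow> nat \<Rightarrow> real" where
  "sin_coeff n c j = (real j / (2 * real n)) ^ snd c * sin (real j * sample_point n (fst c) + real (snd c) * pi / 2)"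

lemma abs_sin_coeff_le:
  assumes "j \<le> 2 * n"
  shows "\<bar>sin_coeff n c j\<bar> \<le> 1"
proof -
  have "(real j / (2 * real n)) ^ snd c \<le> 1"
    using assms by (intro power_le_one) (cases "n = 0"; simp add: field_simps)+
  thus ?thesis
    unfolding sin_coeff_def abs_mult using abs_sin_le_one
    by (intro mult_le_one) auto
qed

lemma finite_So: "finite (So n)"
  by (simp add: So_def)

lemma card_So_le: "card (So n) \<le> n"
proof -
  have "inj_on (\<lambda>j. j div 2) (So n)"
    by (auto simp: inj_on_def So_def elim!: oddE)
  moreover have "(\<lambda>j. j div 2) ` So n \<subseteq> {..<n}"
    by (auto simp: So_def)
  ultimately show ?thesis
    using card_inj_on_le[of "\<lambda>j. j div 2" "So n" "{..<n}"] by simp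
qed

lemma higher_deriv_s_o_minus_s_hat:
  assumes "n > 0"
  shows "(deriv ^^ l) (s_o n \<epsilon>) (sample_point n k) - (deriv ^^ l) (s_hat n \<I> \<alpha>) (sample_point n k)
           = (2 * real n) ^ l * (\<Sum>j\<in>So n. (\<epsilon> j - eps_hat n \<I> \<alpha> j) * sin_coeff n (k, l) j)"
proof -
  have "s_o n \<epsilon> = (\<lambda>\<theta>. \<Sum>j\<in>So n. \<epsilon> j * sin (real j * \<theta>))"
    and "s_hat n \<I> \<alpha> = (\<lambda>\<theta>. \<Sum>j\<in>So n. eps_hat n \<I> \<alpha> j * sin (real j * \<theta>))"
    by (simp_all add: fun_eq_iff s_o_def s_hat_def)
  hence "(deriv ^^ l) (s_o n \<epsilon>) (sample_point n k) - (deriv ^^ l) (s_hat n \<I> \<alpha>) (sample_point n k)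
      = (\<Sum>j\<in>So n. \<epsilon> j * real j ^ l * sin (real j * sample_point n k + real l * pi / 2))
        - (\<Sum>j\<in>So n. eps_hat n \<I> \<alpha> j * real j ^ l * sin (real j * sample_point n k + real l * pi / 2))"
    by (simp only: higher_deriv_sin_sum[OF finite_So])
  also have "\<dots> = (\<Sum>j\<in>So n. (\<epsilon> j - eps_hat n \<I> \<alpha> j) * (real j ^ l * sin (real j * sample_point n k + real l * pi / 2)))"
    by (simp add: sum_subtractf[symmetric] algebra_simps)
  also have "\<dots> = (\<Sum>j\<in>So n. (2 * real n) ^ l * ((\<epsilon> j - eps_hat n \<I> \<alpha> j) * sin_coeff n (k, l) j))"
    using assms by (intro sum.cong refl) (simp add: sin_coeff_def power_divide)
  finally show ?thesis
    by (simp add: sum_distrib_left)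
qed

lemma exists_signs_approximating_s_hat:
  fixes n :: nat
  assumes n: "n \<ge> 1681" and eps_hat: "\<forall>j\<in>So n. \<bar>eps_hat n \<I> \<alpha> j\<bar> \<le> 1"
  shows "\<exists>\<epsilon>. (\<forall>j\<in>So n. \<epsilon> j \<in> {-1, 1}) \<and> (\<forall>k\<in>{1..16 * n}. \<forall>l.
           \<bar>(deriv ^^ l) (s_o n \<epsilon>) (sample_point n k) - (deriv ^^ l) (s_hat n \<I> \<alpha>) (sample_point n k)\<bar>
             \<le> (65 + 2 * real l) * sqrt n * (2 * real n) ^ l)"
proof -
  have "\<forall>k\<in>{1..16 * n}. \<forall>l. \<forall>j\<in>So n. \<bar>sin_coeff n (k, l) j\<bar> \<le> 1"
    by (auto simp: So_def intro: abs_sin_coeff_le)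
  moreover have "card {1..16 * n} \<le> 16 * n"
    by simp
  ultimately obtain \<epsilon> where \<epsilon>: "\<forall>j\<in>So n. \<epsilon> j \<in> {-1, 1}"
    and close: "\<forall>k\<in>{1..16 * n}. \<forall>l.
       \<bar>\<Sum>j\<in>So n. (\<epsilon> j - eps_hat n \<I> \<alpha> j) * sin_coeff n (k, l) j\<bar> \<le> (65 + 2 * real l) * sqrt n"
    using exists_signs_uniformly_close[OF n finite_atLeastAtMost _ finite_So card_So_le _ eps_hat] by blast
  have "\<bar>(deriv ^^ l) (s_o n \<epsilon>) (sample_point n k) - (deriv ^^ l) (s_hat n \<I> \<alpha>) (sample_point n k)\<bar>
      \<le> (65 + 2 * real l) * sqrt n * (2 * real n) ^ l" if "k \<in> {1..16 * n}" for k l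
  proof -
    have "\<bar>(deriv ^^ l) (s_o n \<epsilon>) (sample_point n k) - (deriv ^^ l) (s_hat n \<I> \<alpha>) (sample_point n k)\<bar>
        = (2 * real n) ^ l * \<bar>\<Sum>j\<in>So n. (\<epsilon> j - eps_hat n \<I> \<alpha> j) * sin_coeff n (k, l) j\<bar>"
      using n by (simp add: higher_deriv_s_o_minus_s_hat abs_mult)
    also have "\<dots> \<le> (2 * real n) ^ l * ((65 + 2 * real l) * sqrt n)"
      using close that by (intro mult_left_mono) auto
    finally show ?thesis
      by (simp only: mult.commute)
  qed
  thus ?thesis
    using \<epsilon> by blast
qed

(* The hypotheses on t, on the intervals and on the colouring enter only through
   |eps_hat j| <= 1. *)
theorem lemma5p4:
  shows "\<exists>N0::nat. \<forall>n\<ge>N0. \<forall>(t::int) (\<I>::real set set) (\<alpha>::real set \<Rightarrow> real).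
     n > 0 \<and> odd t \<and> 2 powr (-43) < gamma n t \<and> gamma n t \<le> 2 powr (-40) \<and>
     suitable n t \<I> \<and> well_separated n t \<I> \<and> symmetric_colouring \<I> \<alpha> \<and>
     (\<forall>j\<in>So n. \<bar>eps_hat n \<I> \<alpha> j\<bar> \<le> 1)
     \<longrightarrow> (\<exists>\<epsilon>::nat \<Rightarrow> real. (\<forall>j\<in>So n. \<epsilon> j \<in> {-1, 1}) \<and>
          (\<forall>k\<in>{1..16*n}. \<forall>l::nat.
             let \<theta>k = (2*real k - 1) * pi / (4 * (16 * real n)) in
             \<bar>(deriv ^^ l) (s_o n \<epsilon>) \<theta>k - (deriv ^^ l) (s_hat n \<I> \<alpha>) \<theta>k\<bar>
               \<le> (65 + 2 * real l) * sqrt n * (2 * real n) ^ l))"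
  unfolding Let_def sample_point_def[symmetric] by (blast intro: exists_signs_approximating_s_hat)

end
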